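(* Let $1\le n<L$ and $p_k,q_k>0$ for all $k$. In the stationary distribution of the chain on $\mathcal{A}_{L,n}$, for all $1\le i\le n$ and $1\le j\le L$, $$\langle\tau_{i,j}\rangle=\frac{1}{L},$$ and for all $1\le i\le n$ and $1\le j<j'\le L$, $\langle\eta_{i,j}\rangle=\langle\eta_{i,j'}\rangle$.
   Context: Particle labels/rows are taken modulo $n$, positions/columns modulo $L$. $\Omega_{L,n}$ is the set of words $w_1\cdots w_L$ on the ring $\mathbb{Z}/L\mathbb{Z}$ over the alphabet $\{\bullet_1,\dots,\bullet_n,\Box_1,\dots,\Box_n\}$ in which each $\bullet_k$ occurs exactly once, the $\bullet_1,\dots,\bullet_n$ appear in this cyclic order, and the remaining $L-n$ letters are arbitrary $\Box_i$'s. Transitions (displayed segments are consecutive positions, rest unchanged, $C$ a possibly empty word in the $\Box$-letters): (T1) $\bullet_k\Box_i \to \Box_i\bullet_k$ at rate $p_k$, if $i\neq k$; (T2) $\bullet_{k-1}\,C\,\bullet_k\Box_k \to \bullet_{k-1}\Box_{k-1}\,C\,\bullet_k$ at rate $p_k$; (T3) $\Box_i\bullet_k \to \bullet_k\Box_i$ at rate $q_k$, if $i\neq k$; (T4) $\Box_k\bullet_k\,C\,\bullet_{k+1} \to \bullet_k\,C\,\Box_{k+1}\bullet_{k+1}$ at rate $q_k$. $\mathcal{A}_{L,n}$ is the set of arrays with $n$ rows and $L$ columns, entries in $\{\cdot,\bullet,\Box\}$, identified with $\Omega_{L,n}$ via: column $j$ has a $\bullet$ (resp. $\Box$) in row $k$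 and $\cdot$ elsewhere iff $w_j=\bullet_k$ (resp. $\Box_k$); it carries the transported dynamics, which is irreducible under the stated hypotheses. $\tau_{i,j}$ (resp. $\eta_{i,j}$) is the indicator that site $(i,j)$ (row $i$, column $j$) is occupied by a $\bullet$ (resp. $\Box$), and $\langle\cdot\rangle$ denotes expectation under the unique stationary distribution. *)

theory Defs
  imports Complex_Main
begin

text \<open>Letters of the alphabet: P k is the particle \<bullet>_k, H i is the box (hole) \<Box>_i.
  Labels are 0-based: k, i range over {0..<n} (paper: 1..n); positions are 0-based
  in {0..<L} (paper: 1..L).  A configuration is a list of length L, read cyclically.\<close>
datatype letter = P nat | H nat

definition is_P :: "letter \<Rightarrow> bool" where
  "is_P x = (case x of P _ \<Rightarrow> True | H _ \<Rightarrow> False)"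

definition label_ok :: "nat \<Rightarrow> letter \<Rightarrow> bool" where
  "label_ok n x = (case x of P k \<Rightarrow> k < n | H i \<Rightarrow> i < n)"

definition omega :: "nat \<Rightarrow> nat \<Rightarrow> letter list set" where
  "omega L n = {w. length w = L \<and> (\<forall>x\<in>set w. label_ok n x)
     \<and> (\<forall>k<n. count_list w (P k) = 1)
     \<and> (\<exists>r. [k. P k \<leftarrow> w] = rotate r [0..<n])}"

text \<open>Cyclic distance from position j back to the previous particle, and forward to the
  next particle (equal to L if j holds the only particle).\<close>
definition dback :: "nat \<Rightarrow> letter list \<Rightarrow> nat \<Rightarrow> nat" where
  "dback L w j = (LEAST d. 0 < d \<and> is_P (w ! ((j + L - d) mod L)))"

definition dfwd :: "nat \<Rightarrow> letter list \<Rightarrow> nat \<Rightarrow> nat" where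
  "dfwd L w j = (LEAST d. 0 < d \<and> is_P (w ! ((j + d) mod L)))"

definition swap_at :: "letter list \<Rightarrow> nat \<Rightarrow> nat \<Rightarrow> letter list" where
  "swap_at w a b = w[a := w ! b, b := w ! a]"

text \<open>(T2) for the particle P k at position j with H k at j+1:
  P_{k-1} C P_k H_k  becomes  P_{k-1} H_{k-1} C P_k.\<close>
definition t2_res :: "nat \<Rightarrow> nat \<Rightarrow> letter list \<Rightarrow> nat \<Rightarrow> nat \<Rightarrow> letter list" where
  "t2_res L n w j k = (let d = dback L w j in
     map (\<lambda>m. if m = (j + 1) mod L then P k
              else if m = (j + 1 + L - d) mod L then H ((k + n - 1) mod n)
              else if (\<exists>t\<in>{1..<d}. m = (j + 1 + L - d + t) mod L) then w ! ((m + L - 1) mod L)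
              else w ! m) [0..<L])"

text \<open>(T4) for the particle P k at position j with H k at j-1:
  H_k P_k C P_{k+1}  becomes  P_k C H_{k+1} P_{k+1}.\<close>
definition t4_res :: "nat \<Rightarrow> nat \<Rightarrow> letter list \<Rightarrow> nat \<Rightarrow> nat \<Rightarrow> letter list" where
  "t4_res L n w j k = (let d = dfwd L w j in
     map (\<lambda>m. if m = (j + L - 1) mod L then P k
              else if m = (j + d + L - 1) mod L then H ((k + 1) mod n)
              else if (\<exists>t\<in>{1..<d}. m = (j + L - 1 + t) mod L) then w ! ((m + 1) mod L)
              else w ! m) [0..<L])"

definition rate_at :: "nat \<Rightarrow> nat \<Rightarrow> (nat \<Rightarrow> real) \<Rightarrow> (nat \<Rightarrow> real)
    \<Rightarrow> letter list \<Rightarrow> letter list \<Rightarrow> nat \<Rightarrow> real" where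
  "rate_at L n p q w w' j =
    (case w ! j of H _ \<Rightarrow> 0
     | P k \<Rightarrow>
        (case w ! ((j + 1) mod L) of P _ \<Rightarrow> 0
         | H i \<Rightarrow> if i \<noteq> k
                  then (if swap_at w j ((j + 1) mod L) = w' then p k else 0)   \<comment> \<open>T1\<close>
                  else (if t2_res L n w j k = w' then p k else 0))             \<comment> \<open>T2\<close>
      + (case w ! ((j + L - 1) mod L) of P _ \<Rightarrow> 0
         | H i \<Rightarrow> if i \<noteq> k
                  then (if swap_at w j ((j + L - 1) mod L) = w' then q k else 0) \<comment> \<open>T3\<close>
                  else (if t4_res L n w j k = w' then q k else 0)))"          \<comment> \<open>T4\<close>

definition rate :: "nat \<Rightarrow> nat \<Rightarrow> (nat \<Rightarrow> real) \<Rightarrow> (nat \<Rightarrow> real)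
    \<Rightarrow> letter list \<Rightarrow> letter list \<Rightarrow> real" where
  "rate L n p q w w' = (\<Sum>j<L. rate_at L n p q w w' j)"

definition stationary_dist :: "nat \<Rightarrow> nat \<Rightarrow> (nat \<Rightarrow> real) \<Rightarrow> (nat \<Rightarrow> real)
    \<Rightarrow> (letter list \<Rightarrow> real) \<Rightarrow> bool" where
  "stationary_dist L n p q \<pi> \<longleftrightarrow>
     (\<forall>w\<in>omega L n. 0 \<le> \<pi> w) \<and> (\<Sum>w\<in>omega L n. \<pi> w) = 1 \<and>
     (\<forall>w\<in>omega L n.
        (\<Sum>w'\<in>omega L n - {w}. \<pi> w' * rate L n p q w' w)
          = \<pi> w * (\<Sum>w'\<in>omega L n - {w}. rate L n p q w w'))"

definition tau :: "nat \<Rightarrow> nat \<Rightarrow> letter list \<Rightarrow> real" where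
  "tau i j w = (if w ! j = P i then 1 else 0)"

definition eta :: "nat \<Rightarrow> nat \<Rightarrow> letter list \<Rightarrow> real" where
  "eta i j w = (if w ! j = H i then 1 else 0)"

definition expect :: "nat \<Rightarrow> nat \<Rightarrow> (letter list \<Rightarrow> real) \<Rightarrow> (letter list \<Rightarrow> real) \<Rightarrow> real" where
  "expect L n \<pi> f = (\<Sum>w\<in>omega L n. \<pi> w * f w)"

end

(*
  The rates are invariant under rotating the ring, so a rotated stationary distribution is
  again stationary.  Every configuration reaches the packed one, P0 H0 ... H0 P1 P2 ... P(n-1):
  letting particles jump rightwards over boxes, one first collects all boxes in the gap following
  particle 0, passes them on to particle n-1 and hands them down again gap by gap; a box k
  handed from particle k to particle k-1 turns into a box k-1 by (T2), so all boxes arrive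
  at particle 0 with label 0.  The same moves lead from the packed configuration to its
  rotations.  Hence there is a single closed class, the stationary distribution is unique and
  therefore rotation invariant.  So the expectations of tau i j and eta i j do not depend on
  the column j, and as each row contains exactly one particle, those of tau i j add up to 1.
*)
theory Submission
  imports Defs
begin

section \<open>Stationary distributions of finite continuous-time Markov chains\<close>

definition global_balance :: "'a set \<Rightarrow> ('a \<Rightarrow> 'a \<Rightarrow> real) \<Rightarrow> ('a \<Rightarrow> real) \<Rightarrow> bool" where
  "global_balance S Q \<nu> \<longleftrightarrow>
     (\<forall>w\<in>S. (\<Sum>v\<in>S - {w}. \<nu> v * Q v w) = \<nu> w * (\<Sum>v\<in>S - {w}. Q w v))"

definition stationary_on :: "'a set \<Rightarrow> ('a \<Rightarrow> 'a \<Rightarrow> real) \<Rightarrow> ('a \<Rightarrow> real) \<Rightarrow> bool" where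
  "stationary_on S Q \<nu> \<longleftrightarrow> (\<forall>w\<in>S. 0 \<le> \<nu> w) \<and> sum \<nu> S = 1 \<and> global_balance S Q \<nu>"

definition jump :: "'a set \<Rightarrow> ('a \<Rightarrow> 'a \<Rightarrow> real) \<Rightarrow> 'a \<Rightarrow> 'a \<Rightarrow> bool" where
  "jump S Q v w \<longleftrightarrow> v \<in> S \<and> w \<in> S \<and> v \<noteq> w \<and> 0 < Q v w"

lemma stationary_dist_iff_stationary_on:
  "stationary_dist L n p q \<pi> \<longleftrightarrow> stationary_on (omega L n) (rate L n p q) \<pi>"
  unfolding stationary_dist_def stationary_on_def global_balance_def by simp

lemma sum_off_diagonal_swap:
  fixes g :: "'a \<Rightarrow> 'a \<Rightarrow> 'b::comm_monoid_add"
  assumes "finite A"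
  shows "(\<Sum>w\<in>A. \<Sum>v\<in>A - {w}. g v w) = (\<Sum>w\<in>A. \<Sum>v\<in>A - {w}. g w v)"
proof -
  have off_diag: "(\<Sum>w\<in>A. \<Sum>v\<in>A - {w}. h v w) = (\<Sum>(w, v)\<in>{(w, v). w \<in> A \<and> v \<in> A \<and> v \<noteq> w}. h v w)"
    for h :: "'a \<Rightarrow> 'a \<Rightarrow> 'b"
    using assms by (subst sum.Sigma) (auto intro!: sum.cong)
  have "(\<Sum>(w, v)\<in>{(w, v). w \<in> A \<and> v \<in> A \<and> v \<noteq> w}. g v w)
      = (\<Sum>(w, v)\<in>{(w, v). w \<in> A \<and> v \<in> A \<and> v \<noteq> w}. g w v)"
    by (rule sum.reindex_bij_witness[of _ prod.swap prod.swap]) auto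
  then show ?thesis by (simp add: off_diag)
qed

locale rate_matrix =
  fixes S :: "'a set" and Q :: "'a \<Rightarrow> 'a \<Rightarrow> real"
  assumes finite_states: "finite S"
    and rate_nonneg: "v \<in> S \<Longrightarrow> 0 \<le> Q v w"
begin

abbreviation reaches :: "'a \<Rightarrow> 'a \<Rightarrow> bool" where
  "reaches \<equiv> (jump S Q)\<^sup>*\<^sup>*"

lemma positive_mass_propagates:
  assumes nonneg: "\<forall>w\<in>S. 0 \<le> \<nu> w" and balance: "global_balance S Q \<nu>"
  shows "reaches v w \<Longrightarrow> 0 < \<nu> v \<Longrightarrow> 0 < \<nu> w"
proof (induction rule: rtranclp_induct)
  case (step u w)
  then have u: "u \<in> S" and w: "w \<in> S" and "u \<noteq> w" and "0 < Q u w"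
    by (auto simp: jump_def)
  then have "\<nu> u * Q u w \<le> (\<Sum>v\<in>S - {w}. \<nu> v * Q v w)"
    using nonneg rate_nonneg finite_states
    by (intro member_le_sum[where f = "\<lambda>v. \<nu> v * Q v w"]) auto
  moreover have "0 < \<nu> u * Q u w" using step.IH[OF step.prems] \<open>0 < Q u w\<close> by simp
  ultimately have "0 < \<nu> w * (\<Sum>v\<in>S - {w}. Q w v)"
    using balance w unfolding global_balance_def by auto
  then show ?case using nonneg w by (metis less_eq_real_def mult_eq_0_iff)
qed simp

text \<open>Summing the balance equations over a set A of states cancels the flow inside A,
  so the flow into A equals the flow out of A.\<close>
lemma no_inflow_imp_no_outflow:
  assumes nonneg: "\<forall>w\<in>S. 0 \<le> \<nu> w" and balance: "global_balance S Q \<nu>" and A: "A \<subseteq> S"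
    and no_inflow: "\<forall>w\<in>A. \<forall>v\<in>S - A. \<nu> v * Q v w = 0"
  shows "\<forall>w\<in>A. \<forall>v\<in>S - A. \<nu> w * Q w v = 0"
proof -
  have fin_A: "finite A" using A finite_states finite_subset by blast
  have split: "(\<Sum>v\<in>S - {w}. f v) = (\<Sum>v\<in>A - {w}. f v) + (\<Sum>v\<in>S - A. f v)"
    if "w \<in> A" for f :: "'a \<Rightarrow> real" and w
  proof -
    have "S - {w} = (A - {w}) \<union> (S - A)" using A that by auto
    then show ?thesis
      using finite_states fin_A
      by (metis Diff_disjoint Diff_iff finite_Diff disjoint_iff sum.union_disjoint)
  qed
  have "(\<Sum>w\<in>A. \<Sum>v\<in>S - {w}. \<nu> v * Q v w) = (\<Sum>w\<in>A. \<nu> w * (\<Sum>v\<in>S - {w}. Q w v))"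
    using balance A unfolding global_balance_def by (intro sum.cong) auto
  also have "\<dots> = (\<Sum>w\<in>A. \<Sum>v\<in>S - {w}. \<nu> w * Q w v)"
    by (simp add: sum_distrib_left)
  moreover have "(\<Sum>w\<in>A. \<Sum>v\<in>S - A. \<nu> v * Q v w) = 0"
    using no_inflow by (auto intro!: sum.neutral)
  ultimately have "(\<Sum>w\<in>A. \<Sum>v\<in>A - {w}. \<nu> v * Q v w)
      = (\<Sum>w\<in>A. \<Sum>v\<in>A - {w}. \<nu> w * Q w v) + (\<Sum>w\<in>A. \<Sum>v\<in>S - A. \<nu> w * Q w v)"
    by (simp add: split sum.distrib cong: sum.cong)
  then have out_zero: "(\<Sum>w\<in>A. \<Sum>v\<in>S - A. \<nu> w * Q w v) = 0"
    using sum_off_diagonal_swap[OF fin_A, of "\<lambda>v w. \<nu> v * Q v w"] by simp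
  have term_nonneg: "0 \<le> \<nu> w * Q w v" if "w \<in> A" for w v
    using that A nonneg rate_nonneg by auto
  show ?thesis
    using out_zero fin_A finite_states term_nonneg
    by (subst (asm) sum_nonneg_eq_0_iff) (auto simp: sum_nonneg sum_nonneg_eq_0_iff)
qed

lemma support_reachable:
  assumes nonneg: "\<forall>w\<in>S. 0 \<le> \<nu> w" and balance: "global_balance S Q \<nu>"
    and reach: "\<forall>w\<in>S. reaches w z" and w: "w \<in> S" and pos: "0 < \<nu> w"
  shows "reaches z w"
proof (rule ccontr)
  assume unreached: "\<not> reaches z w"
  define A where "A = {x \<in> S. 0 < \<nu> x \<and> \<not> reaches z x}"
  have A: "A \<subseteq> S" unfolding A_def by auto
  have "\<forall>x\<in>A. \<forall>v\<in>S - A. \<nu> v * Q v x = 0"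
  proof (intro ballI)
    fix x v assume x: "x \<in> A" and v: "v \<in> S - A"
    show "\<nu> v * Q v x = 0"
    proof (cases "\<nu> v = 0")
      case False
      then have "reaches z v" using nonneg v unfolding A_def by force
      then have "\<not> jump S Q v x"
        using x rtranclp.rtrancl_into_rtrancl[of "jump S Q" z v x] unfolding A_def by blast
      then have "Q v x = 0" using rate_nonneg[of v x] v x A unfolding jump_def by auto
      then show ?thesis by simp
    qed simp
  qed
  then have no_outflow: "\<forall>x\<in>A. \<forall>v\<in>S - A. \<nu> x * Q x v = 0"
    by (rule no_inflow_imp_no_outflow[OF nonneg balance A])
  have A_closed: "reaches x y \<Longrightarrow> x \<in> A \<Longrightarrow> y \<in> A" for x y
  proof (induction rule: rtranclp_induct)
    case (step y' z')
    then have "y' \<in> A" "z' \<in> S" "0 < Q y' z'" by (auto simp: jump_def)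
    then show ?case using no_outflow unfolding A_def by fastforce
  qed
  have "w \<in> A" unfolding A_def using w pos unreached by auto
  then have "z \<in> A" using A_closed reach w by blast
  then show False unfolding A_def by auto
qed

lemma stationary_support_iff:
  assumes stat: "stationary_on S Q \<nu>" and reach: "\<forall>w\<in>S. reaches w z" and w: "w \<in> S"
  shows "0 < \<nu> w \<longleftrightarrow> reaches z w"
proof -
  have nonneg: "\<forall>w\<in>S. 0 \<le> \<nu> w" and balance: "global_balance S Q \<nu>" and "sum \<nu> S = 1"
    using stat unfolding stationary_on_def by auto
  then obtain u where "u \<in> S" "0 < \<nu> u"
    by (metis less_eq_real_def sum.neutral zero_neq_one)
  then have "0 < \<nu> z" using positive_mass_propagates[OF nonneg balance] reach by blast
  then show ?thesis
    using support_reachable[OF nonneg balance reach w] positive_mass_propagates[OF nonneg balance]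
    by blast
qed

lemma global_balance_diff:
  assumes "global_balance S Q \<pi>" and "global_balance S Q \<sigma>"
  shows "global_balance S Q (\<lambda>w. \<pi> w - c * \<sigma> w)"
  unfolding global_balance_def
proof
  fix w assume "w \<in> S"
  have "(\<Sum>v\<in>S - {w}. (\<pi> v - c * \<sigma> v) * Q v w)
      = (\<Sum>v\<in>S - {w}. \<pi> v * Q v w) - c * (\<Sum>v\<in>S - {w}. \<sigma> v * Q v w)"
    by (simp add: left_diff_distrib sum_subtractf sum_distrib_left mult.assoc)
  also have "\<dots> = (\<pi> w - c * \<sigma> w) * (\<Sum>v\<in>S - {w}. Q w v)"
    using assms \<open>w \<in> S\<close> unfolding global_balance_def by (simp add: algebra_simps)
  finally show "(\<Sum>v\<in>S - {w}. (\<pi> v - c * \<sigma> v) * Q v w) = (\<pi> w - c * \<sigma> w) * (\<Sum>v\<in>S - {w}. Q w v)" .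
qed

lemma balanced_vanishes_everywhere:
  assumes nonneg: "\<forall>w\<in>S. 0 \<le> \<nu> w" and balance: "global_balance S Q \<nu>"
    and reach: "\<forall>w\<in>S. reaches w z" and "reaches z w0" and "\<nu> w0 = 0"
  shows "\<forall>w\<in>S. \<nu> w = 0"
proof (rule ccontr)
  assume "\<not> (\<forall>w\<in>S. \<nu> w = 0)"
  then obtain w where "w \<in> S" "0 < \<nu> w" using nonneg by force
  then have "0 < \<nu> w0"
    using positive_mass_propagates[OF nonneg balance] reach \<open>reaches z w0\<close>
    by (meson rtranclp_trans)
  then show False using \<open>\<nu> w0 = 0\<close> by simp
qed

text \<open>Both supports are the set of states reachable from z; subtracting from \<pi> the largest
  multiple of \<sigma> that keeps it nonnegative leaves a nonnegative balanced function vanishing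
  somewhere on that set, hence everywhere.\<close>
lemma stationary_unique:
  assumes stat_\<pi>: "stationary_on S Q \<pi>" and stat_\<sigma>: "stationary_on S Q \<sigma>"
    and reach: "\<forall>w\<in>S. reaches w z" and z: "z \<in> S"
  shows "\<forall>w\<in>S. \<pi> w = \<sigma> w"
proof -
  define C where "C = {w \<in> S. reaches z w}"
  have "finite C" unfolding C_def using finite_states by simp
  have "z \<in> C" unfolding C_def using z by simp
  have supp_\<pi>: "0 < \<pi> w \<longleftrightarrow> w \<in> C" and supp_\<sigma>: "0 < \<sigma> w \<longleftrightarrow> w \<in> C" if "w \<in> S" for w
    using stationary_support_iff[OF stat_\<pi> reach that] stationary_support_iff[OF stat_\<sigma> reach that]
    unfolding C_def using that by auto
  have nonneg_\<pi>: "\<forall>w\<in>S. 0 \<le> \<pi> w" and bal_\<pi>: "global_balance S Q \<pi>" and sum_\<pi>: "sum \<pi> S = 1"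
    and nonneg_\<sigma>: "\<forall>w\<in>S. 0 \<le> \<sigma> w" and bal_\<sigma>: "global_balance S Q \<sigma>" and sum_\<sigma>: "sum \<sigma> S = 1"
    using stat_\<pi> stat_\<sigma> unfolding stationary_on_def by auto
  define c where "c = Min ((\<lambda>w. \<pi> w / \<sigma> w) ` C)"
  obtain w0 where w0: "w0 \<in> C" "c = \<pi> w0 / \<sigma> w0"
    using Min_in[OF finite_imageI[OF \<open>finite C\<close>], of "\<lambda>w. \<pi> w / \<sigma> w"] \<open>z \<in> C\<close>
    unfolding c_def by auto
  define \<nu> where "\<nu> = (\<lambda>w. \<pi> w - c * \<sigma> w)"
  have nonneg_\<nu>: "\<forall>w\<in>S. 0 \<le> \<nu> w"
  proof
    fix w assume w: "w \<in> S"
    show "0 \<le> \<nu> w"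
    proof (cases "w \<in> C")
      case True
      then have "0 < \<sigma> w" "c \<le> \<pi> w / \<sigma> w"
        using supp_\<sigma> w \<open>finite C\<close> unfolding c_def by auto
      then show ?thesis unfolding \<nu>_def by (simp add: pos_le_divide_eq mult.commute)
    next
      case False
      then have "\<pi> w = 0" "\<sigma> w = 0"
        using supp_\<pi>[OF w] supp_\<sigma>[OF w] w nonneg_\<pi> nonneg_\<sigma> by force+
      then show ?thesis unfolding \<nu>_def by simp
    qed
  qed
  have bal_\<nu>: "global_balance S Q \<nu>"
    unfolding \<nu>_def by (rule global_balance_diff[OF bal_\<pi> bal_\<sigma>])
  have "0 < \<sigma> w0" using supp_\<sigma> w0(1) unfolding C_def by auto
  then have "\<nu> w0 = 0" using w0(2) unfolding \<nu>_def by simp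
  have "\<forall>w\<in>S. \<nu> w = 0"
    using balanced_vanishes_everywhere[OF nonneg_\<nu> bal_\<nu> reach _ \<open>\<nu> w0 = 0\<close>] w0(1)
    unfolding C_def by blast
  then have proportional: "\<forall>w\<in>S. \<pi> w = c * \<sigma> w" unfolding \<nu>_def by simp
  then have "sum \<pi> S = c * sum \<sigma> S" by (simp add: sum_distrib_left)
  then have "c = 1" using sum_\<pi> sum_\<sigma> by simp
  then show ?thesis using proportional by simp
qed

lemma stationary_on_symmetry:
  assumes stat: "stationary_on S Q \<nu>" and f: "bij_betw f S S"
    and Q_f: "\<And>v w. v \<in> S \<Longrightarrow> w \<in> S \<Longrightarrow> Q (f v) (f w) = Q v w"
  shows "stationary_on S Q (\<nu> \<circ> f)"
proof -
  have inj: "inj_on f S" and image: "f ` S = S" using f by (auto simp: bij_betw_def)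
  have image_remove: "f ` (S - {w}) = S - {f w}" if "w \<in> S" for w
    using inj image that by (simp add: inj_on_image_set_diff)
  have sum_f: "(\<Sum>v\<in>S - {w}. g (f v)) = (\<Sum>u\<in>S - {f w}. g u)" if "w \<in> S" for w and g :: "'a \<Rightarrow> real"
    using sum.reindex[of f "S - {w}" g] inj image_remove[OF that] by (simp add: inj_on_diff)
  have "global_balance S Q (\<nu> \<circ> f)"
    unfolding global_balance_def
  proof
    fix w assume w: "w \<in> S"
    then have fw: "f w \<in> S" using image by blast
    have "(\<Sum>v\<in>S - {w}. (\<nu> \<circ> f) v * Q v w) = (\<Sum>v\<in>S - {w}. \<nu> (f v) * Q (f v) (f w))"
      using Q_f w by (intro sum.cong) auto
    also have "\<dots> = (\<Sum>u\<in>S - {f w}. \<nu> u * Q u (f w))" by (rule sum_f[OF w])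
    also have "\<dots> = \<nu> (f w) * (\<Sum>u\<in>S - {f w}. Q (f w) u)"
      using stat fw unfolding stationary_on_def global_balance_def by blast
    also have "(\<Sum>u\<in>S - {f w}. Q (f w) u) = (\<Sum>v\<in>S - {w}. Q (f w) (f v))"
      by (rule sum_f[OF w, symmetric])
    also have "\<dots> = (\<Sum>v\<in>S - {w}. Q w v)" using Q_f w by (intro sum.cong) auto
    finally show "(\<Sum>v\<in>S - {w}. (\<nu> \<circ> f) v * Q v w) = (\<nu> \<circ> f) w * (\<Sum>v\<in>S - {w}. Q w v)"
      by simp
  qed
  moreover have "sum (\<nu> \<circ> f) S = 1"
    using stat sum.reindex[OF inj, of \<nu>] image unfolding stationary_on_def by simp
  moreover have "\<forall>w\<in>S. 0 \<le> (\<nu> \<circ> f) w" using stat image unfolding stationary_on_def by auto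
  ultimately show ?thesis unfolding stationary_on_def by blast
qed

end

section \<open>Rotation invariance of the rates\<close>

lemma Suc_mod_eq_Suc_mod_iff:
  fixes m x L :: nat
  assumes "m < L"
  shows "Suc m mod L = Suc x mod L \<longleftrightarrow> m = x mod L"
proof -
  have "Suc x mod L = Suc (x mod L) mod L" by (simp add: mod_Suc_eq)
  moreover have "x mod L < L" using assms by simp
  ultimately show ?thesis using assms by (auto simp: mod_Suc split: if_splits)
qed

text \<open>Stated with the truncated subtractions in the shape in which these indices occur in
  dback, t2_res and t4_res.\<close>
lemma Suc_mod_shift:
  fixes j a d x L :: nat
  assumes "d \<le> L"
  shows "(Suc j mod L + a + L - d + x) mod L = Suc (j + a + L - d + x) mod L"
proof -
  have "Suc j mod L + a + L - d + x = Suc j mod L + (a + (L - d) + x)"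
    and "Suc (j + a + L - d + x) = Suc j + (a + (L - d) + x)"
    using assms by simp_all
  then show ?thesis by (simp only: mod_add_left_eq)
qed

lemma pred_mod_Suc_mod:
  fixes m L :: nat
  assumes "m < L"
  shows "(Suc m mod L + L - 1) mod L = m"
  using Suc_mod_shift[where j = m and a = 0 and d = 1 and x = 0 and L = L] assms by simp

lemma nth_rotate1_mod:
  "length w = L \<Longrightarrow> m < L \<Longrightarrow> rotate1 w ! m = w ! (Suc m mod L)"
  using nth_rotate1[of m w] by simp

lemma nth_rotate1_pred:
  assumes "length w = L" and "m < L"
  shows "rotate1 w ! ((m + L - 1) mod L) = w ! m"
proof -
  have "Suc ((m + L - 1) mod L) mod L = m"
    using assms(2) by (simp add: mod_Suc_eq)
  then show ?thesis using nth_rotate1_mod[OF assms(1)] assms(2) by simp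
qed

lemma Least_pos_cong:
  fixes P Q :: "nat \<Rightarrow> bool"
  assumes "\<And>d. d \<le> L \<Longrightarrow> P d = Q d" and "0 < L" and "P L"
  shows "(LEAST d. 0 < d \<and> P d) = (LEAST d. 0 < d \<and> Q d)"
proof -
  define D where "D = (LEAST d. 0 < d \<and> Q d)"
  have QL: "0 < L \<and> Q L" using assms by auto
  then have D: "0 < D \<and> Q D" unfolding D_def by (rule LeastI)
  have "D \<le> L" unfolding D_def using QL by (rule Least_le)
  have "(LEAST d. 0 < d \<and> P d) = D"
  proof (rule Least_equality)
    show "0 < D \<and> P D" using D \<open>D \<le> L\<close> assms(1) by auto
    show "D \<le> e" if "0 < e \<and> P e" for e
      using that assms(1) \<open>D \<le> L\<close> unfolding D_def by (cases "e \<le> L") (auto intro: Least_le)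
  qed
  then show ?thesis unfolding D_def .
qed

lemma dback_rotate1:
  assumes len: "length w = L" and j: "j < L" and particle: "is_P (w ! (Suc j mod L))"
  shows "dback L (rotate1 w) j = dback L w (Suc j mod L)"
  unfolding dback_def
proof (rule Least_pos_cong)
  fix d assume "d \<le> L"
  then have "Suc ((j + L - d) mod L) mod L = (Suc j mod L + L - d) mod L"
    using Suc_mod_shift[where a = 0 and x = 0 and j = j] by (simp add: mod_Suc_eq)
  then show "is_P (rotate1 w ! ((j + L - d) mod L)) = is_P (w ! ((Suc j mod L + L - d) mod L))"
    using nth_rotate1_mod[OF len] j by simp
next
  show "is_P (rotate1 w ! ((j + L - L) mod L))"
    using particle nth_rotate1_mod[OF len j] j by simp
qed (use j in simp)

lemma dfwd_rotate1:
  assumes len: "length w = L" and j: "j < L"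
  shows "dfwd L (rotate1 w) j = dfwd L w (Suc j mod L)"
proof -
  have "rotate1 w ! ((j + d) mod L) = w ! ((Suc j mod L + d) mod L)" for d
    using nth_rotate1_mod[OF len, of "(j + d) mod L"] j
    by (simp add: mod_Suc_eq mod_add_left_eq)
  then show ?thesis unfolding dfwd_def by simp
qed

lemma nth_swap_at:
  assumes "a < length w" "b < length w" "m < length w"
  shows "swap_at w a b ! m = (if m = b then w ! a else if m = a then w ! b else w ! m)"
  using assms unfolding swap_at_def by (auto simp: nth_list_update)

lemma swap_at_rotate1:
  assumes len: "length w = L" and a: "a < L" and b: "b < L"
  shows "swap_at (rotate1 w) a b = rotate1 (swap_at w (Suc a mod L) (Suc b mod L))"
proof (rule nth_equalityI)
  fix m assume "m < length (swap_at (rotate1 w) a b)"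
  then have m: "m < L" using len by (simp add: swap_at_def)
  have "rotate1 (swap_at w (Suc a mod L) (Suc b mod L)) ! m
      = swap_at w (Suc a mod L) (Suc b mod L) ! (Suc m mod L)"
    using nth_rotate1_mod[of "swap_at w (Suc a mod L) (Suc b mod L)" L m] len m
    by (simp add: swap_at_def)
  also have "\<dots> = (if m = b then w ! (Suc a mod L) else if m = a then w ! (Suc b mod L)
                   else w ! (Suc m mod L))"
    using nth_swap_at[of "Suc a mod L" w "Suc b mod L" "Suc m mod L"] len m a b
      Suc_mod_eq_Suc_mod_iff[OF m, of b] Suc_mod_eq_Suc_mod_iff[OF m, of a]
    by simp
  also have "\<dots> = swap_at (rotate1 w) a b ! m"
    using nth_swap_at[of a "rotate1 w" b m] len a b m nth_rotate1_mod[OF len] by simp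
  finally show "swap_at (rotate1 w) a b ! m = rotate1 (swap_at w (Suc a mod L) (Suc b mod L)) ! m"
    by simp
qed (simp add: swap_at_def)

lemma t2_res_rotate1:
  assumes len: "length w = L" and j: "j < L" and particle: "is_P (w ! (Suc j mod L))"
  shows "t2_res L n (rotate1 w) j k = rotate1 (t2_res L n w (Suc j mod L) k)"
proof -
  define J where "J = Suc j mod L"
  define d where "d = dback L w J"
  have "0 < L" using j by simp
  have d_rotate: "dback L (rotate1 w) j = d"
    unfolding d_def J_def using dback_rotate1[OF len j particle] .
  have "d \<le> L" unfolding d_def dback_def
    by (rule Least_le) (use particle \<open>0 < L\<close> J_def in simp)
  show ?thesis
  proof (rule nth_equalityI)
    fix m assume "m < length (t2_res L n (rotate1 w) j k)"
    then have m: "m < L" by (simp add: t2_res_def Let_def)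
    have same_source: "(Suc m mod L = (J + 1 + L - d) mod L) = (m = (j + 1 + L - d) mod L)"
      unfolding J_def using Suc_mod_eq_Suc_mod_iff[OF m, of "j + 1 + L - d"]
        Suc_mod_shift[OF \<open>d \<le> L\<close>, of j 1 0] by simp
    have same_gap: "(\<exists>t\<in>{1..<d}. Suc m mod L = (J + 1 + L - d + t) mod L)
        = (\<exists>t\<in>{1..<d}. m = (j + 1 + L - d + t) mod L)"
      unfolding J_def using Suc_mod_eq_Suc_mod_iff[OF m] Suc_mod_shift[OF \<open>d \<le> L\<close>, of j 1]
      by simp
    have same_target: "(Suc m mod L = (J + 1) mod L) = (m = (j + 1) mod L)"
      unfolding J_def using Suc_mod_eq_Suc_mod_iff[OF m, of "Suc j"] by (simp add: mod_Suc_eq)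
    have "rotate1 (t2_res L n w J k) ! m = t2_res L n w J k ! (Suc m mod L)"
      using nth_rotate1_mod[of "t2_res L n w J k" L m] m by (simp add: t2_res_def Let_def)
    also have "\<dots> =
      (if Suc m mod L = (J + 1) mod L then P k
       else if Suc m mod L = (J + 1 + L - d) mod L then H ((k + n - 1) mod n)
       else if (\<exists>t\<in>{1..<d}. Suc m mod L = (J + 1 + L - d + t) mod L) then w ! m
       else w ! (Suc m mod L))"
      using \<open>0 < L\<close> pred_mod_Suc_mod[OF m] unfolding t2_res_def Let_def d_def[symmetric] by simp
    also have "\<dots> = t2_res L n (rotate1 w) j k ! m"
      using m nth_rotate1_pred[OF len m] nth_rotate1_mod[OF len m]
      unfolding t2_res_def Let_def d_rotate same_source same_gap same_target by simp
    finally show "t2_res L n (rotate1 w) j k ! m = rotate1 (t2_res L n w (Suc j mod L) k) ! m"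
      unfolding J_def by simp
  qed (simp add: t2_res_def Let_def)
qed

lemma t4_res_rotate1:
  assumes len: "length w = L" and j: "j < L"
  shows "t4_res L n (rotate1 w) j k = rotate1 (t4_res L n w (Suc j mod L) k)"
proof -
  define J where "J = Suc j mod L"
  define d where "d = dfwd L w J"
  have "0 < L" using j by simp
  have d_rotate: "dfwd L (rotate1 w) j = d" unfolding d_def J_def using dfwd_rotate1[OF len j] .
  show ?thesis
  proof (rule nth_equalityI)
    fix m assume "m < length (t4_res L n (rotate1 w) j k)"
    then have m: "m < L" by (simp add: t4_res_def Let_def)
    have shift: "(Suc j mod L + a + L - 1 + x) mod L = Suc (j + a + L - 1 + x) mod L" for a x
      using Suc_mod_shift[where d = 1 and j = j and a = a and x = x and L = L] \<open>0 < L\<close> by simp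
    have same_target: "(Suc m mod L = (J + L - 1) mod L) = (m = (j + L - 1) mod L)"
      unfolding J_def using Suc_mod_eq_Suc_mod_iff[OF m, of "j + L - 1"] shift[of 0 0] by simp
    have same_source: "(Suc m mod L = (J + d + L - 1) mod L) = (m = (j + d + L - 1) mod L)"
      unfolding J_def using Suc_mod_eq_Suc_mod_iff[OF m, of "j + d + L - 1"] shift[of d 0] by simp
    have same_gap: "(\<exists>t\<in>{1..<d}. Suc m mod L = (J + L - 1 + t) mod L)
        = (\<exists>t\<in>{1..<d}. m = (j + L - 1 + t) mod L)"
      unfolding J_def using Suc_mod_eq_Suc_mod_iff[OF m] shift[of 0] by simp
    have "rotate1 (t4_res L n w J k) ! m = t4_res L n w J k ! (Suc m mod L)"
      using nth_rotate1_mod[of "t4_res L n w J k" L m] m by (simp add: t4_res_def Let_def)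
    also have "\<dots> =
      (if Suc m mod L = (J + L - 1) mod L then P k
       else if Suc m mod L = (J + d + L - 1) mod L then H ((k + 1) mod n)
       else if (\<exists>t\<in>{1..<d}. Suc m mod L = (J + L - 1 + t) mod L) then w ! ((Suc m mod L + 1) mod L)
       else w ! (Suc m mod L))"
      using \<open>0 < L\<close> unfolding t4_res_def Let_def d_def[symmetric] by simp
    also have "\<dots> = t4_res L n (rotate1 w) j k ! m"
      using m nth_rotate1_mod[OF len, of "(m + 1) mod L"] nth_rotate1_mod[OF len m] \<open>0 < L\<close>
      unfolding t4_res_def Let_def d_rotate same_source same_gap same_target by simp
    finally show "t4_res L n (rotate1 w) j k ! m = rotate1 (t4_res L n w (Suc j mod L) k) ! m"
      unfolding J_def by simp
  qed (simp add: t4_res_def Let_def)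
qed

lemma rate_at_rotate1:
  assumes len: "length w = L" and j: "j < L"
  shows "rate_at L n p q (rotate1 w) (rotate1 w') j = rate_at L n p q w w' (Suc j mod L)"
proof -
  define J where "J = Suc j mod L"
  have "0 < L" using j by simp
  have at: "rotate1 w ! j = w ! J" using nth_rotate1_mod[OF len j] J_def by simp
  have right: "rotate1 w ! ((j + 1) mod L) = w ! ((J + 1) mod L)"
    using nth_rotate1_mod[OF len, of "(j + 1) mod L"] \<open>0 < L\<close> J_def by (simp add: mod_Suc_eq)
  have left: "rotate1 w ! ((j + L - 1) mod L) = w ! ((J + L - 1) mod L)"
    using nth_rotate1_pred[OF len j] pred_mod_Suc_mod[OF j] J_def by simp
  have swap_right: "swap_at (rotate1 w) j ((j + 1) mod L) = rotate1 (swap_at w J ((J + 1) mod L))"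
    using swap_at_rotate1[OF len j, of "(j + 1) mod L"] \<open>0 < L\<close> J_def by (simp add: mod_Suc_eq)
  have "Suc ((j + L - 1) mod L) mod L = (J + L - 1) mod L"
    using Suc_mod_shift[where j = j and a = 0 and d = 1 and x = 0 and L = L] \<open>0 < L\<close> J_def
    by (simp add: mod_Suc_eq)
  then have swap_left:
    "swap_at (rotate1 w) j ((j + L - 1) mod L) = rotate1 (swap_at w J ((J + L - 1) mod L))"
    using swap_at_rotate1[OF len j, of "(j + L - 1) mod L"] \<open>0 < L\<close> J_def by simp
  have rotate1_eq_iff: "(rotate1 x = rotate1 y) = (x = y)" for x y :: "letter list"
    using inj_rotate1 by (auto dest: injD)
  show ?thesis
  proof (cases "w ! J")
    case (P k)
    then have "is_P (w ! (Suc j mod L))" using J_def by (simp add: is_P_def)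
    then have t2: "t2_res L n (rotate1 w) j k = rotate1 (t2_res L n w J k)"
      and t4: "t4_res L n (rotate1 w) j k = rotate1 (t4_res L n w J k)"
      using t2_res_rotate1[OF len j] t4_res_rotate1[OF len j] J_def by simp_all
    show ?thesis
      unfolding rate_at_def J_def[symmetric] at right left P letter.case swap_right swap_left
        t2 t4 rotate1_eq_iff by (rule refl)
  qed (simp add: rate_at_def J_def[symmetric] at)
qed

lemma sum_lessThan_Suc_mod:
  fixes f :: "nat \<Rightarrow> 'a::comm_monoid_add"
  assumes "0 < L"
  shows "(\<Sum>j<L. f (Suc j mod L)) = (\<Sum>j<L. f j)"
proof -
  obtain L' where L': "L = Suc L'" using assms by (cases L) auto
  have "(\<Sum>j<L. f (Suc j mod L)) = (\<Sum>j<L'. f (Suc j)) + f 0"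
    unfolding L' by (simp add: mod_Suc)
  also have "\<dots> = (\<Sum>j<L. f j)"
    unfolding L' sum.lessThan_Suc_shift by (simp add: add.commute)
  finally show ?thesis .
qed

lemma rate_rotate1:
  assumes "length w = L" and "0 < L"
  shows "rate L n p q (rotate1 w) (rotate1 w') = rate L n p q w w'"
  unfolding rate_def
  using rate_at_rotate1[OF assms(1)] sum_lessThan_Suc_mod[OF assms(2), of "rate_at L n p q w w'"]
  by simp

lemma rate_rotate:
  assumes "length w = L" and "0 < L"
  shows "rate L n p q (rotate s w) (rotate s w') = rate L n p q w w'"
  using assms by (induction s) (simp_all add: rate_rotate1)

lemma particle_labels_rotate1: "\<exists>s. [k. P k \<leftarrow> rotate1 w] = rotate s [k. P k \<leftarrow> w]"
proof (cases w)
  case (Cons a xs)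
  have "[k. P k \<leftarrow> rotate1 w] = [k. P k \<leftarrow> xs] @ [k. P k \<leftarrow> [a]]" using Cons by simp
  also have "\<dots> = rotate (length [k. P k \<leftarrow> [a]]) ([k. P k \<leftarrow> [a]] @ [k. P k \<leftarrow> xs])"
    by (rule rotate_append[symmetric])
  finally show ?thesis using Cons by auto
qed simp

lemma rotate1_in_omega: "w \<in> omega L n \<Longrightarrow> rotate1 w \<in> omega L n"
proof -
  assume w: "w \<in> omega L n"
  then obtain s where s: "[k. P k \<leftarrow> w] = rotate s [0..<n]" unfolding omega_def by blast
  obtain s' where "[k. P k \<leftarrow> rotate1 w] = rotate s' [k. P k \<leftarrow> w]"
    using particle_labels_rotate1 by blast
  then have "[k. P k \<leftarrow> rotate1 w] = rotate (s' + s) [0..<n]" using s by (simp add: rotate_rotate)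
  moreover have "count_list (rotate1 w) x = count_list w x" for x by (cases w) auto
  ultimately show ?thesis using w unfolding omega_def by auto
qed

lemma rotate_in_omega: "w \<in> omega L n \<Longrightarrow> rotate s w \<in> omega L n"
  by (induction s) (auto simp: rotate1_in_omega)

lemma length_omega: "w \<in> omega L n \<Longrightarrow> length w = L"
  unfolding omega_def by simp

lemma label_ok_nth_omega: "w \<in> omega L n \<Longrightarrow> j < L \<Longrightarrow> label_ok n (w ! j)"
  unfolding omega_def by auto

lemma finite_omega: "finite (omega L n)"
proof (rule finite_subset)
  show "omega L n \<subseteq> {w. set w \<subseteq> P ` {..<n} \<union> H ` {..<n} \<and> length w = L}"
  proof
    fix w assume w: "w \<in> omega L n"
    have "x \<in> P ` {..<n} \<union> H ` {..<n}" if "x \<in> set w" for x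
    proof -
      have "label_ok n x" using w that unfolding omega_def by blast
      then show ?thesis unfolding label_ok_def by (cases x) auto
    qed
    then show "w \<in> {w. set w \<subseteq> P ` {..<n} \<union> H ` {..<n} \<and> length w = L}"
      using length_omega[OF w] by auto
  qed
qed (rule finite_lists_length_eq, simp)

lemma bij_betw_rotate1_omega: "bij_betw rotate1 (omega L n) (omega L n)"
proof (rule bij_betw_imageI)
  show "inj_on rotate1 (omega L n)" using inj_rotate1 by (rule inj_on_subset) simp
  have "w \<in> rotate1 ` omega L n" if w: "w \<in> omega L n" for w
  proof -
    have "rotate1 (rotate (length w - 1) w) = w"
      by (cases "w = []") (simp_all del: rotate_Suc add: rotate_Suc[symmetric])
    then show ?thesis using rotate_in_omega[OF w] by (metis image_eqI)
  qed
  then show "rotate1 ` omega L n = omega L n" using rotate1_in_omega by blast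
qed

lemma rate_at_nonneg:
  assumes w: "w \<in> omega L n" and j: "j < L" and "\<forall>k<n. 0 < p k" and "\<forall>k<n. 0 < q k"
  shows "0 \<le> rate_at L n p q w w' j"
proof (cases "w ! j")
  case (P k)
  then have "k < n" using label_ok_nth_omega[OF w j] by (simp add: label_ok_def)
  then show ?thesis using assms(3,4) unfolding rate_at_def P
    by (auto split: letter.split intro!: add_nonneg_nonneg)
qed (simp add: rate_at_def)

lemma rate_at_le_rate:
  assumes "w \<in> omega L n" and "j < L" and "\<forall>k<n. 0 < p k" and "\<forall>k<n. 0 < q k"
  shows "rate_at L n p q w w' j \<le> rate L n p q w w'"
  unfolding rate_def using rate_at_nonneg[OF assms(1) _ assms(3,4)] assms(2)
  by (intro member_le_sum) auto

lemma rate_nonneg: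
  assumes "w \<in> omega L n" and "\<forall>k<n. 0 < p k" and "\<forall>k<n. 0 < q k"
  shows "0 \<le> rate L n p q w w'"
  unfolding rate_def using rate_at_nonneg[OF assms(1) _ assms(2,3)] by (intro sum_nonneg) auto

lemma tau_rotate1: "w \<in> omega L n \<Longrightarrow> j < L \<Longrightarrow> tau i j (rotate1 w) = tau i (Suc j mod L) w"
  unfolding tau_def using nth_rotate1_mod length_omega by metis

lemma eta_rotate1: "w \<in> omega L n \<Longrightarrow> j < L \<Longrightarrow> eta i j (rotate1 w) = eta i (Suc j mod L) w"
  unfolding eta_def using nth_rotate1_mod length_omega by metis

lemma expect_column_const:
  assumes invariant: "\<forall>w\<in>omega L n. \<pi> (rotate1 w) = \<pi> w"
    and shift: "\<And>j w. w \<in> omega L n \<Longrightarrow> j < L \<Longrightarrow> f j (rotate1 w) = f (Suc j mod L) w"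
  shows "j < L \<Longrightarrow> expect L n \<pi> (f j) = expect L n \<pi> (f 0)"
proof (induction j)
  case (Suc j)
  have "expect L n \<pi> (f j) = (\<Sum>w\<in>omega L n. \<pi> (rotate1 w) * f j (rotate1 w))"
    unfolding expect_def
    using sum.reindex_bij_betw[OF bij_betw_rotate1_omega, of "\<lambda>w. \<pi> w * f j w"] by simp
  also have "\<dots> = expect L n \<pi> (f (Suc j))"
    unfolding expect_def using invariant shift Suc.prems by (intro sum.cong) auto
  finally show ?case using Suc by simp
qed simp

lemma sum_tau_row:
  assumes "w \<in> omega L n" and "i < n"
  shows "(\<Sum>j<L. tau i j w) = 1"
proof -
  have "(\<Sum>j<L. tau i j w) = real (card {j. j < length w \<and> P i = w ! j})"
    unfolding tau_def using length_omega[OF assms(1)]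
    by (simp add: sum.If_cases Int_def conj_commute eq_commute)
  also have "\<dots> = count_list w (P i)"
    by (simp add: count_list_eq_length_filter length_filter_conv_card)
  also have "\<dots> = 1" using assms unfolding omega_def by auto
  finally show ?thesis .
qed

lemma sum_expect_tau:
  assumes "stationary_on (omega L n) Q \<pi>" and "i < n"
  shows "(\<Sum>j<L. expect L n \<pi> (tau i j)) = 1"
proof -
  have "(\<Sum>j<L. expect L n \<pi> (tau i j)) = (\<Sum>w\<in>omega L n. \<pi> w * (\<Sum>j<L. tau i j w))"
    unfolding expect_def by (subst sum.swap) (simp add: sum_distrib_left)
  also have "\<dots> = 1"
    using assms sum_tau_row unfolding stationary_on_def by simp
  finally show ?thesis .
qed

section \<open>Configurations as gap words\<close>

text \<open>gs ! k lists the labels of the boxes between particle k and particle k + 1; the word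
  gap_segment gs 0 n, read cyclically, is the configuration with these gaps.\<close>
definition gap_segment :: "nat list list \<Rightarrow> nat \<Rightarrow> nat \<Rightarrow> letter list" where
  "gap_segment gs a b = concat (map (\<lambda>k. P k # map H (gs ! k)) [a..<b])"

definition gaps_wf :: "nat \<Rightarrow> nat \<Rightarrow> nat list list \<Rightarrow> bool" where
  "gaps_wf L n gs \<longleftrightarrow>
     length gs = n \<and> (\<forall>k<n. \<forall>i\<in>set (gs ! k). i < n) \<and> length (gap_segment gs 0 n) = L"

definition packed_gaps :: "nat \<Rightarrow> nat \<Rightarrow> nat list list" where
  "packed_gaps L n = replicate (L - n) 0 # replicate (n - 1) []"

lemma gap_segment_empty [simp]: "gap_segment gs a a = []"
  by (simp add: gap_segment_def)

lemma gap_segment_Suc: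
  "a \<le> b \<Longrightarrow> gap_segment gs a (Suc b) = gap_segment gs a b @ (P b # map H (gs ! b))"
  by (simp add: gap_segment_def)

lemma gap_segment_split:
  assumes "a \<le> k" and "k < b"
  shows "gap_segment gs a b
    = gap_segment gs a k @ (P k # map H (gs ! k)) @ gap_segment gs (Suc k) b"
proof -
  have "[a..<b] = [a..<k] @ k # [Suc k..<b]"
    using assms
    by (metis le_less_trans less_imp_le_nat upt_add_eq_append le_add_diff_inverse upt_conv_Cons)
  then show ?thesis unfolding gap_segment_def by simp
qed

lemma gap_segment_cong:
  "(\<And>k. a \<le> k \<Longrightarrow> k < b \<Longrightarrow> gs ! k = gs' ! k) \<Longrightarrow> gap_segment gs a b = gap_segment gs' a b"
  unfolding gap_segment_def by (rule arg_cong[where f = concat], rule map_cong) auto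

lemma length_gap_segment: "length (gap_segment gs 0 N) = N + (\<Sum>k<N. length (gs ! k))"
  by (induction N) (simp_all add: gap_segment_Suc)

lemma count_gap_segment: "count_list (gap_segment gs 0 N) (P k) = (if k < N then 1 else 0)"
  by (induction N) (auto simp: gap_segment_Suc count_list_0_iff)

lemma particle_labels_gap_segment: "[k. P k \<leftarrow> gap_segment gs 0 N] = [0..<N]"
proof (induction N)
  case (Suc N)
  have "[k. P k \<leftarrow> map H (gs ! N)] = []" by (induction "gs ! N") auto
  then show ?case using Suc by (simp add: gap_segment_Suc)
qed simp

lemma set_gap_segment:
  "x \<in> set (gap_segment gs 0 N) \<longleftrightarrow> (\<exists>k<N. x = P k \<or> (\<exists>i\<in>set (gs ! k). x = H i))"
  unfolding gap_segment_def by auto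

lemma gap_word_in_omega: "gaps_wf L n gs \<Longrightarrow> gap_segment gs 0 n \<in> omega L n"
  unfolding omega_def gaps_wf_def
  by (auto simp: set_gap_segment label_ok_def count_gap_segment particle_labels_gap_segment
      intro: exI[of _ 0])

lemma length_gap_word: "gaps_wf L n gs \<Longrightarrow> length (gap_segment gs 0 n) = L"
  unfolding gaps_wf_def by simp

lemma particle_labels_no_particle: "\<forall>y\<in>set T. \<not> is_P y \<Longrightarrow> [k. P k \<leftarrow> T] = []"
  by (induction T) (auto simp: is_P_def split: letter.split)

lemma boxes_eq_map_H: "\<forall>y\<in>set T. \<not> is_P y \<Longrightarrow> \<exists>g. T = map H g"
proof (induction T)
  case (Cons y T)
  then obtain g where "T = map H g" by auto
  moreover obtain i where "y = H i" using Cons.prems by (cases y) (auto simp: is_P_def)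
  ultimately have "y # T = map H (i # g)" by simp
  then show ?case by (rule exI)
qed simp

lemma word_eq_blocks:
  "[k. P k \<leftarrow> v] = ks \<Longrightarrow> v = [] \<or> is_P (hd v) \<Longrightarrow>
   \<exists>gs. length gs = length ks \<and> v = concat (map (\<lambda>(k, g). P k # map H g) (zip ks gs))"
proof (induction ks arbitrary: v)
  case Nil
  then show ?case by (cases v) (auto simp: is_P_def split: letter.splits)
next
  case (Cons k ks)
  obtain x v' where v: "v = x # v'" using Cons.prems by (cases v) auto
  then obtain a where x: "x = P a" using Cons.prems by (cases x) (auto simp: is_P_def)
  then have "a = k" and labels: "[k. P k \<leftarrow> v'] = ks" using Cons.prems v by auto
  define T where "T = takeWhile (\<lambda>y. \<not> is_P y) v'"
  define D where "D = dropWhile (\<lambda>y. \<not> is_P y) v'"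
  have "v' = T @ D" unfolding T_def D_def by simp
  have boxes: "\<forall>y\<in>set T. \<not> is_P y" unfolding T_def by (auto dest: set_takeWhileD)
  then obtain g where g: "T = map H g" using boxes_eq_map_H by blast
  have "[k. P k \<leftarrow> D] = ks"
    using labels particle_labels_no_particle[OF boxes] \<open>v' = T @ D\<close> by simp
  moreover have "D = [] \<or> is_P (hd D)"
    unfolding D_def using hd_dropWhile[of "\<lambda>y. \<not> is_P y" v'] by auto
  ultimately obtain gs where gs: "length gs = length ks"
    "D = concat (map (\<lambda>(k, g). P k # map H g) (zip ks gs))" using Cons.IH by blast
  have "v = concat (map (\<lambda>(k, g). P k # map H g) (zip (k # ks) (g # gs)))"
    using gs v x \<open>a = k\<close> \<open>v' = T @ D\<close> g by simp
  then show ?case using gs by (intro exI[of _ "g # gs"]) simp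
qed

lemma omega_eq_rotate_gap_word:
  assumes w: "w \<in> omega L n" and "1 \<le> n"
  shows "\<exists>s gs. gaps_wf L n gs \<and> w = rotate s (gap_segment gs 0 n)"
proof -
  have "count_list w (P 0) = 1" using w \<open>1 \<le> n\<close> unfolding omega_def by auto
  then have "P 0 \<in> set w" using count_list_0_iff[of w "P 0"] by auto
  then obtain a where a: "a < L" "w ! a = P 0"
    using length_omega[OF w] by (auto simp: in_set_conv_nth)
  define w0 where "w0 = rotate a w"
  have w0: "w0 \<in> omega L n" unfolding w0_def using rotate_in_omega[OF w] .
  have "rotate (L - a) w0 = rotate (L - a + a) w" unfolding w0_def by (simp add: rotate_rotate)
  also have "\<dots> = w" using a length_omega[OF w] by simp
  finally have "w = rotate (L - a) w0" ..
  have "w0 ! 0 = P 0" and "w0 \<noteq> []"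
    using nth_rotate[of 0 w a] a length_omega[OF w] unfolding w0_def by auto
  then obtain t where w0_Cons: "w0 = P 0 # t" by (cases w0) auto
  obtain r where r: "[k. P k \<leftarrow> w0] = rotate r [0..<n]" using w0 unfolding omega_def by blast
  have "[k. P k \<leftarrow> w0] = 0 # [k. P k \<leftarrow> t]" using w0_Cons by simp
  then have "hd (rotate r [0..<n]) = 0" using r by simp
  moreover have "hd (rotate r [0..<n]) = [0..<n] ! (r mod n)"
    using hd_rotate_conv_nth[of "[0..<n]" r] \<open>1 \<le> n\<close> by simp
  ultimately have "r mod n = 0" using \<open>1 \<le> n\<close> by simp
  then have labels: "[k. P k \<leftarrow> w0] = [0..<n]" using r by simp
  have "w0 = [] \<or> is_P (hd w0)" using w0_Cons by (simp add: is_P_def)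
  then obtain gs where gs: "length gs = n"
      "w0 = concat (map (\<lambda>(k, g). P k # map H g) (zip [0..<n] gs))"
    using word_eq_blocks[OF labels] by auto
  have "zip [0..<n] gs = map (\<lambda>k. (k, gs ! k)) [0..<n]"
    using gs(1) by (intro nth_equalityI) auto
  then have w0_gaps: "w0 = gap_segment gs 0 n"
    using gs(2) unfolding gap_segment_def by (simp add: comp_def)
  have "gaps_wf L n gs"
    unfolding gaps_wf_def
  proof (intro conjI allI impI ballI)
    show "length (gap_segment gs 0 n) = L" using w0_gaps length_omega[OF w0] by simp
    fix k i assume "k < n" and "i \<in> set (gs ! k)"
    then have "H i \<in> set w0" unfolding w0_gaps set_gap_segment by blast
    then show "i < n" using w0 unfolding omega_def label_ok_def by fastforce
  qed (fact gs(1))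
  then show ?thesis using \<open>w = rotate (L - a) w0\<close> w0_gaps by blast
qed

lemma length_packed_gaps: "1 \<le> n \<Longrightarrow> length (packed_gaps L n) = n"
  unfolding packed_gaps_def by simp

lemma nth_packed_gaps: "k < n \<Longrightarrow> packed_gaps L n ! k = (if k = 0 then replicate (L - n) 0 else [])"
  unfolding packed_gaps_def by (cases k) auto

lemma sum_gap_lengths_single:
  assumes "1 \<le> n" and "\<forall>k. 0 < k \<and> k < n \<longrightarrow> gs ! k = []"
  shows "(\<Sum>k<n. length (gs ! k)) = length (gs ! 0)"
proof -
  have "(\<Sum>k<n. length (gs ! k)) = (\<Sum>k\<in>{0}. length (gs ! k))"
    using assms by (intro sum.mono_neutral_right) auto
  then show ?thesis by simp
qed

lemma packed_gaps_wf: "1 \<le> n \<Longrightarrow> n < L \<Longrightarrow> gaps_wf L n (packed_gaps L n)"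
  unfolding gaps_wf_def length_gap_segment
  using sum_gap_lengths_single[of n "packed_gaps L n"]
  by (auto simp: length_packed_gaps nth_packed_gaps split: if_splits)

lemma gaps_eq_packed:
  assumes wf: "gaps_wf L n gs" and "1 \<le> n"
    and empty: "\<forall>k. 0 < k \<and> k < n \<longrightarrow> gs ! k = []" and zeros: "set (gs ! 0) \<subseteq> {0}"
  shows "gs = packed_gaps L n"
proof (rule nth_equalityI)
  have "length gs = n" "n + length (gs ! 0) = L"
    using wf sum_gap_lengths_single[OF \<open>1 \<le> n\<close> empty] unfolding gaps_wf_def length_gap_segment
    by auto
  moreover have "replicate (length (gs ! 0)) 0 = gs ! 0"
    using zeros by (intro replicate_length_same) auto
  ultimately show "gs ! k = packed_gaps L n ! k" if "k < length gs" for k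
    using that empty nth_packed_gaps[of k n L] by (cases "k = 0") auto
  show "length gs = length (packed_gaps L n)"
    using \<open>length gs = n\<close> length_packed_gaps[OF \<open>1 \<le> n\<close>] by simp
qed

text \<open>Particle k jumps over the first box following it, which moves into the gap of
  particle k': a box of another species keeps its label and ends that gap (T1), a box k
  becomes a box k' at its start (T2).\<close>
definition gap_transfer :: "nat list list \<Rightarrow> nat \<Rightarrow> nat \<Rightarrow> nat list list" where
  "gap_transfer gs k k' = (case gs ! k of [] \<Rightarrow> gs
     | i # rest \<Rightarrow> gs[k := rest, k' := (if i = k then k' # gs ! k' else gs ! k' @ [i])])"

lemma sum_remove_two:
  fixes f :: "nat \<Rightarrow> 'a::comm_monoid_add"
  assumes "k < n" and "k' < n" and "k \<noteq> k'"
  shows "(\<Sum>j<n. f j) = f k + f k' + (\<Sum>j\<in>{..<n} - {k, k'}. f j)"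
  using assms sum.remove[of "{..<n}" k f] sum.remove[of "{..<n} - {k}" k' f]
  by (simp add: add.assoc insert_commute set_diff_eq)

lemma gaps_wf_gap_transfer:
  assumes wf: "gaps_wf L n gs" and k: "k < n" "k' < n" "k \<noteq> k'"
  shows "gaps_wf L n (gap_transfer gs k k')"
proof (cases "gs ! k")
  case (Cons i rest)
  define Y where "Y = (if i = k then k' # gs ! k' else gs ! k' @ [i])"
  have gs': "gap_transfer gs k k' = gs[k := rest, k' := Y]"
    unfolding gap_transfer_def Y_def Cons by simp
  have len: "length gs = n" and labels: "\<forall>j<n. \<forall>x\<in>set (gs ! j). x < n"
    using wf unfolding gaps_wf_def by auto
  have new_k: "gs[k := rest, k' := Y] ! k = rest" and new_k': "gs[k := rest, k' := Y] ! k' = Y"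
    and unchanged: "\<And>j. j \<noteq> k \<Longrightarrow> j \<noteq> k' \<Longrightarrow> gs[k := rest, k' := Y] ! j = gs ! j"
    using len k by simp_all
  have "(\<Sum>j<n. length (gs[k := rest, k' := Y] ! j))
      = length rest + length Y + (\<Sum>j\<in>{..<n} - {k, k'}. length (gs[k := rest, k' := Y] ! j))"
    using sum_remove_two[OF k] new_k new_k' by metis
  also have "\<dots> = length (gs ! k) + length (gs ! k') + (\<Sum>j\<in>{..<n} - {k, k'}. length (gs ! j))"
    using Cons unchanged by (simp add: Y_def)
  also have "\<dots> = (\<Sum>j<n. length (gs ! j))"
    using sum_remove_two[OF k] by metis
  finally have lengths: "(\<Sum>j<n. length (gs[k := rest, k' := Y] ! j)) = (\<Sum>j<n. length (gs ! j))" .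
  have new_labels: "x < n" if "j < n" "x \<in> set (gs[k := rest, k' := Y] ! j)" for j x
  proof -
    have "i < n" using labels k Cons by auto
    consider "j = k'" | "j = k" | "j \<noteq> k" "j \<noteq> k'" by blast
    then show ?thesis
      using that labels k Cons new_k new_k' unchanged \<open>i < n\<close> unfolding Y_def
      by cases (auto split: if_splits)
  qed
  show ?thesis
    unfolding gs' gaps_wf_def length_gap_segment
  proof (intro conjI allI impI ballI)
    show "n + (\<Sum>j<n. length (gs[k := rest, k' := Y] ! j)) = L"
      using wf unfolding lengths gaps_wf_def length_gap_segment by simp
    show "length (gs[k := rest, k' := Y]) = n" using len by simp
  qed (rule new_labels)
qed (simp add: gap_transfer_def wf)

lemma gap_word_split_adjacent:
  assumes "1 \<le> k" and "k < n"
  shows "gap_segment gs 0 n = gap_segment gs 0 (k - 1) @ (P (k - 1) # map H (gs ! (k - 1)))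
    @ (P k # map H (gs ! k)) @ gap_segment gs (Suc k) n"
  using gap_segment_split[of 0 k n gs] gap_segment_Suc[of 0 "k - 1" gs] assms by simp

lemma gap_word_split_ends:
  assumes "2 \<le> n"
  shows "gap_segment gs 0 n = (P 0 # map H (gs ! 0)) @ gap_segment gs 1 (n - 1)
    @ (P (n - 1) # map H (gs ! (n - 1)))"
  using gap_segment_Suc[of 0 "n - 1" gs] gap_segment_split[of 0 0 "n - 1" gs] assms
  by (simp add: Suc_diff_le)

lemma gap_emptied_by_transfers:
  fixes R :: "letter list \<Rightarrow> letter list \<Rightarrow> bool"
  assumes "reflp R" and "transp R" and k: "k < n" "k' < n" "k \<noteq> k'"
    and transfer: "\<And>gs. gaps_wf L n gs \<Longrightarrow> gs ! k \<noteq> [] \<Longrightarrow>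
      R (gap_segment gs 0 n) (gap_segment (gap_transfer gs k k') 0 n)"
  shows "gaps_wf L n gs \<Longrightarrow> \<exists>X. R (gap_segment gs 0 n) (gap_segment (gs[k := [], k' := X]) 0 n)
    \<and> gaps_wf L n (gs[k := [], k' := X]) \<and> set X \<subseteq> set (gs ! k') \<union> (set (gs ! k) - {k}) \<union> {k'}"
proof (induction "length (gs ! k)" arbitrary: gs)
  case 0
  then have "gs ! k = []" by simp
  then have "gs[k := [], k' := gs ! k'] = gs" by (metis list_update_id)
  then show ?case using 0 reflpD[OF \<open>reflp R\<close>] by (intro exI[of _ "gs ! k'"]) auto
next
  case (Suc m)
  then obtain i rest where gs_k: "gs ! k = i # rest" by (cases "gs ! k") auto
  define Y where "Y = (if i = k then k' # gs ! k' else gs ! k' @ [i])"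
  define gs1 where "gs1 = gap_transfer gs k k'"
  have "length gs = n" using Suc.prems unfolding gaps_wf_def by simp
  then have gs1: "gs1 = gs[k := rest, k' := Y]" "gs1 ! k = rest" "gs1 ! k' = Y"
    unfolding gs1_def gap_transfer_def gs_k Y_def using k by auto
  have wf1: "gaps_wf L n gs1" unfolding gs1_def by (rule gaps_wf_gap_transfer[OF Suc.prems k])
  have first: "R (gap_segment gs 0 n) (gap_segment gs1 0 n)"
    unfolding gs1_def using transfer[OF Suc.prems] gs_k by simp
  have "m = length (gs1 ! k)" using Suc.hyps(2) gs1(2) gs_k by simp
  then obtain X where X: "R (gap_segment gs1 0 n) (gap_segment (gs1[k := [], k' := X]) 0 n)"
      "gaps_wf L n (gs1[k := [], k' := X])" "set X \<subseteq> set (gs1 ! k') \<union> (set (gs1 ! k) - {k}) \<union> {k'}"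
    using Suc.hyps(1) wf1 by blast
  have same: "gs1[k := [], k' := X] = gs[k := [], k' := X]"
    unfolding gs1(1) using k by (simp add: list_update_swap)
  have "R (gap_segment gs 0 n) (gap_segment (gs[k := [], k' := X]) 0 n)"
    using transpD[OF \<open>transp R\<close> first X(1)] unfolding same .
  moreover have "set X \<subseteq> set (gs ! k') \<union> (set (gs ! k) - {k}) \<union> {k'}"
    using X(3) gs1 gs_k unfolding Y_def by (auto split: if_splits)
  ultimately show ?case using X(2) unfolding same by blast
qed

section \<open>Every configuration reaches the packed one\<close>

lemma inj_rotate: "inj (rotate s)"
  unfolding rotate_def by (rule inj_fn[OF inj_rotate1])

lemma nth_T2_source:
  assumes "m < length (P a # map H C @ P k # H k # D)"
  shows "(P a # map H C @ P k # H k # D) ! m =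
    (if m = 0 then P a else if m \<le> length C then H (C ! (m - 1))
     else if m = Suc (length C) then P k else if m = Suc (Suc (length C)) then H k
     else D ! (m - length C - 3))"
  using assms by (cases m) (auto simp: nth_append nth_Cons' numeral_3_eq_3)

lemma nth_T2_target:
  assumes "m < length (P a # H b # map H C @ P k # D)"
  shows "(P a # H b # map H C @ P k # D) ! m =
    (if m = 0 then P a else if m = 1 then H b else if m \<le> Suc (length C) then H (C ! (m - 2))
     else if m = Suc (Suc (length C)) then P k
     else D ! (m - length C - 3))"
  using assms
  by (cases m) (auto simp: nth_append nth_Cons' numeral_3_eq_3 numeral_2_eq_2 split: nat.split)

lemma dback_T2_source:
  assumes len: "length (P a # map H C @ P k # H k # D) = L"
  shows "dback L (P a # map H C @ P k # H k # D) (Suc (length C)) = Suc (length C)"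
  unfolding dback_def
proof (rule Least_equality)
  let ?w = "P a # map H C @ P k # H k # D" and ?j = "Suc (length C)"
  show "0 < ?j \<and> is_P (?w ! ((?j + L - ?j) mod L))" using len by (simp add: is_P_def)
  fix e assume e: "0 < e \<and> is_P (?w ! ((?j + L - e) mod L))"
  show "?j \<le> e"
  proof (rule ccontr)
    assume "\<not> ?j \<le> e"
    then have "e < ?j" by simp
    then have "(?j + L - e) mod L = ?j - e" using len by (simp add: mod_if)
    moreover have "?w ! (?j - e) = H (C ! (?j - e - 1))"
      using nth_T2_source[of "?j - e" a C k D] \<open>e < ?j\<close> e len by auto
    ultimately show False using e by (simp add: is_P_def)
  qed
qed

lemma t2_res_T2_source:
  assumes len: "length (P a # map H C @ P k # H k # D) = L"
  shows "t2_res L n (P a # map H C @ P k # H k # D) (Suc (length C)) k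
       = P a # H ((k + n - 1) mod n) # map H C @ P k # D"
proof -
  define w where "w = P a # map H C @ P k # H k # D"
  define w' where "w' = P a # H ((k + n - 1) mod n) # map H C @ P k # D"
  define j where "j = Suc (length C)"
  have jL: "Suc j < L" using len unfolding j_def by simp
  have "t2_res L n w j k = w'"
  proof (rule nth_equalityI)
    show "length (t2_res L n w j k) = length w'"
      using len unfolding w_def w'_def by (simp add: t2_res_def Let_def)
    fix m assume "m < length (t2_res L n w j k)"
    then have m: "m < L" by (simp add: t2_res_def Let_def)
    have shifted: "(\<exists>t\<in>{Suc 0..<j}. m = Suc (L + t) mod L) = (2 \<le> m \<and> m \<le> j)"
    proof
      assume "\<exists>t\<in>{Suc 0..<j}. m = Suc (L + t) mod L"
      then obtain t where t: "1 \<le> t" "t < j" "m = (L + Suc t) mod L" by auto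
      then have "m = 1 + t" using jL by (simp add: mod_Suc)
      then show "2 \<le> m \<and> m \<le> j" using t by simp
    next
      assume "2 \<le> m \<and> m \<le> j"
      then have "m = Suc (L + (m - 1)) mod L" using m by simp
      then show "\<exists>t\<in>{Suc 0..<j}. m = Suc (L + t) mod L"
        using \<open>2 \<le> m \<and> m \<le> j\<close> by (intro bexI[of _ "m - 1"]) auto
    qed
    have "(j + 1) mod L = Suc j" and "(j + 1 + L - j) mod L = 1"
      using jL by (simp_all add: mod_Suc)
    then have t2: "t2_res L n w j k ! m =
      (if m = Suc j then P k else if m = 1 then H ((k + n - 1) mod n)
       else if 2 \<le> m \<and> m \<le> j then w ! ((m + L - 1) mod L) else w ! m)"
      using m shifted unfolding t2_res_def Let_def
        dback_T2_source[OF len, folded w_def j_def] by simp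
    have "w ! ((m + L - 1) mod L) = w ! (m - 1)" if "1 \<le> m" using that m by (simp add: mod_if)
    then show "t2_res L n w j k ! m = w' ! m"
      unfolding t2 using nth_T2_source[of m a C k D] nth_T2_source[of "m - 1" a C k D]
        nth_T2_target[of m a "(k + n - 1) mod n" C k D] m len
      unfolding w_def w'_def j_def by (auto simp: numeral_2_eq_2)
  qed
  then show ?thesis unfolding w_def w'_def j_def .
qed

lemma dback_single_particle:
  assumes "0 < L"
  shows "dback L (P 0 # replicate (L - 1) (H 0)) 0 = L"
  unfolding dback_def
proof (rule Least_equality)
  show "0 < L \<and> is_P ((P 0 # replicate (L - 1) (H 0)) ! ((0 + L - L) mod L))"
    using assms by (simp add: is_P_def)
  fix e assume e: "0 < e \<and> is_P ((P 0 # replicate (L - 1) (H 0)) ! ((0 + L - e) mod L))"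
  show "L \<le> e"
  proof (rule ccontr)
    assume "\<not> L \<le> e"
    then show False using e by (auto simp: is_P_def nth_Cons')
  qed
qed

lemma t2_res_single_particle:
  assumes L: "2 \<le> L"
  shows "t2_res L 1 (P 0 # replicate (L - 1) (H 0)) 0 0
    = rotate (L - 1) (P 0 # replicate (L - 1) (H 0))"
    (is "t2_res L 1 ?w 0 0 = rotate (L - 1) ?w")
proof (rule nth_equalityI)
  have "0 < L" using L by simp
  show "length (t2_res L 1 ?w 0 0) = length (rotate (L - 1) ?w)"
    using L by (simp add: t2_res_def Let_def)
  fix m assume "m < length (t2_res L 1 ?w 0 0)"
  then have m: "m < L" by (simp add: t2_res_def Let_def)
  have rotated: "rotate (L - 1) ?w ! m = (if m = 1 then P 0 else H 0)"
    using m L nth_rotate[of m ?w "L - 1"]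
    by (cases m) (auto simp: nth_Cons' mod_if)
  show "t2_res L 1 ?w 0 0 ! m = rotate (L - 1) ?w ! m"
  proof (cases "m = 1")
    case True
    then show ?thesis using m L rotated unfolding t2_res_def Let_def by simp
  next
    case False
    then have "\<exists>t\<in>{1..<L}. m = (0 + 1 + L - L + t) mod L"
      using m L by (cases m) (auto intro: bexI[of _ "L - 1"] bexI[of _ "m - 1"])
    then have "t2_res L 1 ?w 0 0 ! m = ?w ! ((m + L - 1) mod L)"
      using m L False unfolding t2_res_def Let_def dback_single_particle[OF \<open>0 < L\<close>] by simp
    also have "(m + L - 1) mod L = (if m = 0 then L - 1 else m - 1)"
      using m by (cases m) simp_all
    finally show ?thesis using m L False rotated by (auto simp: nth_Cons')
  qed
qed


locale multispecies_ring =
  fixes L n :: nat and p q :: "nat \<Rightarrow> real"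
  assumes one_le_n: "1 \<le> n" and n_less_L: "n < L"
    and p_pos: "\<forall>k<n. 0 < p k" and q_pos: "\<forall>k<n. 0 < q k"
begin

sublocale rate_matrix "omega L n" "rate L n p q"
  using finite_omega rate_nonneg p_pos q_pos by unfold_locales auto

abbreviation move :: "letter list \<Rightarrow> letter list \<Rightarrow> bool" where
  "move \<equiv> jump (omega L n) (rate L n p q)"

lemma L_pos: "0 < L" using n_less_L by simp

lemma move_rotate: "move w w' \<Longrightarrow> move (rotate s w) (rotate s w')"
  unfolding jump_def
  using rotate_in_omega rate_rotate[of w L n p q s w'] length_omega L_pos inj_rotate
  by (metis injD)

lemma reaches_rotate: "reaches w w' \<Longrightarrow> reaches (rotate s w) (rotate s w')"
  by (induction rule: rtranclp_induct) (auto intro: rtranclp.rtrancl_into_rtrancl move_rotate)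

lemma move_in_context:
  assumes "A @ X @ B \<in> omega L n" and "A @ X' @ B \<in> omega L n" and "length X = length X'"
    and "X @ B @ A \<in> omega L n \<Longrightarrow> X' @ B @ A \<in> omega L n \<Longrightarrow> move (X @ B @ A) (X' @ B @ A)"
  shows "move (A @ X @ B) (A @ X' @ B)"
proof -
  have rot: "rotate (length A) (A @ Y @ B) = Y @ B @ A" for Y
    using rotate_append[of A "Y @ B"] by simp
  have "move (X @ B @ A) (X' @ B @ A)"
    using assms(4) rotate_in_omega[OF assms(1)] rotate_in_omega[OF assms(2)] rot by metis
  then have "move (rotate (length (X @ B)) ((X @ B) @ A)) (rotate (length (X @ B)) ((X' @ B) @ A))"
    using move_rotate by simp
  moreover have "rotate (length (X @ B)) ((X @ B) @ A) = A @ X @ B" by (rule rotate_append)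
  moreover have "rotate (length (X @ B)) ((X' @ B) @ A) = A @ X' @ B"
    using rotate_append[of "X' @ B" A] assms(3) by simp
  ultimately show ?thesis by simp
qed

lemma move_right_jump:
  assumes w: "w \<in> omega L n" and w': "w' \<in> omega L n" and "w \<noteq> w'" and j: "j < L"
    and at_j: "w ! j = P k" and next_box: "w ! ((j + 1) mod L) = H i"
    and result: "w' = (if i \<noteq> k then swap_at w j ((j + 1) mod L) else t2_res L n w j k)"
  shows "move w w'"
proof -
  have "k < n" using label_ok_nth_omega[OF w j] at_j by (simp add: label_ok_def)
  then have "0 < p k" "0 < q k" using p_pos q_pos by auto
  then have "p k \<le> rate_at L n p q w w' j"
    unfolding rate_at_def at_j next_box letter.case using result
    by (auto split: letter.split)
  also have "\<dots> \<le> rate L n p q w w'" by (rule rate_at_le_rate[OF w j p_pos q_pos])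
  finally show ?thesis unfolding jump_def using w w' \<open>w \<noteq> w'\<close> \<open>0 < p k\<close> by simp
qed

lemma move_T1_front:
  assumes "P k # H i # D \<in> omega L n" and "H i # P k # D \<in> omega L n" and "i \<noteq> k"
  shows "move (P k # H i # D) (H i # P k # D)"
proof (rule move_right_jump[OF assms(1,2) _ L_pos])
  have "2 \<le> L" using one_le_n n_less_L by simp
  then show "(P k # H i # D) ! ((0 + 1) mod L) = H i" by simp
  show "H i # P k # D = (if i \<noteq> k then swap_at (P k # H i # D) 0 ((0 + 1) mod L)
      else t2_res L n (P k # H i # D) 0 k)"
    using \<open>i \<noteq> k\<close> \<open>2 \<le> L\<close> by (simp add: swap_at_def)
qed (use assms(3) in simp_all)

lemma move_T2_front:
  assumes w: "P a # map H C @ P k # H k # D \<in> omega L n"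
    and w': "P a # H ((k + n - 1) mod n) # map H C @ P k # D \<in> omega L n"
  shows "move (P a # map H C @ P k # H k # D) (P a # H ((k + n - 1) mod n) # map H C @ P k # D)"
proof (rule move_right_jump[OF w w'])
  have len: "length (P a # map H C @ P k # H k # D) = L" using length_omega[OF w] .
  then show "Suc (length C) < L" by simp
  show "(P a # map H C @ P k # H k # D) ! Suc (length C) = P k" by (simp add: nth_append)
  show "(P a # map H C @ P k # H k # D) ! ((Suc (length C) + 1) mod L) = H k"
    using len by (simp add: nth_append)
  show "P a # map H C @ P k # H k # D \<noteq> P a # H ((k + n - 1) mod n) # map H C @ P k # D"
    by (auto dest: arg_cong[where f = "\<lambda>w. w ! Suc (length C)"] simp: nth_append)
  show "P a # H ((k + n - 1) mod n) # map H C @ P k # D =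
    (if k \<noteq> k
     then swap_at (P a # map H C @ P k # H k # D) (Suc (length C)) ((Suc (length C) + 1) mod L)
     else t2_res L n (P a # map H C @ P k # H k # D) (Suc (length C)) k)"
    using t2_res_T2_source[OF len] by simp
qed

lemma move_single_particle:
  assumes "n = 1"
  shows "move (P 0 # replicate (L - 1) (H 0)) (rotate (L - 1) (P 0 # replicate (L - 1) (H 0)))"
proof -
  let ?w = "P 0 # replicate (L - 1) (H 0)"
  have L: "2 \<le> L" using assms n_less_L by simp
  have w: "?w \<in> omega L n"
    using assms L unfolding omega_def label_ok_def
    by (auto simp: count_list_0_iff intro: exI[of _ 0])
  have "?w ! 1 \<noteq> rotate (L - 1) ?w ! 1"
    using L nth_rotate[of 1 ?w "L - 1"] by (simp add: nth_Cons')
  then have "?w \<noteq> rotate (L - 1) ?w" by metis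
  then show ?thesis
  proof (rule move_right_jump[OF w rotate_in_omega[OF w] _ L_pos, where k = 0 and i = 0])
    show "?w ! ((0 + 1) mod L) = H 0" using L by simp
    show "rotate (L - 1) ?w
      = (if 0 \<noteq> (0::nat) then swap_at ?w 0 ((0 + 1) mod L) else t2_res L n ?w 0 0)"
      using t2_res_single_particle[OF L] assms by simp
  qed simp
qed

lemma move_gap_transfer:
  assumes wf: "gaps_wf L n gs" and k: "1 \<le> k" "k < n" and gs_k: "gs ! k = i # rest"
  shows "move (gap_segment gs 0 n) (gap_segment (gap_transfer gs k (k - 1)) 0 n)"
proof -
  define gs' where "gs' = gap_transfer gs k (k - 1)"
  define X where "X = gs ! (k - 1)"
  define U where "U = gap_segment gs 0 (k - 1)"
  define V where "V = gap_segment gs (Suc k) n"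
  have "length gs = n" using wf unfolding gaps_wf_def by simp
  then have gs'_k: "gs' ! k = rest"
    and gs'_prev: "gs' ! (k - 1) = (if i = k then (k - 1) # X else X @ [i])"
    and unchanged: "\<And>j. j \<noteq> k \<Longrightarrow> j \<noteq> k - 1 \<Longrightarrow> gs' ! j = gs ! j"
    unfolding gs'_def gap_transfer_def gs_k X_def using k by auto
  have old: "gap_segment gs 0 n = U @ (P (k - 1) # map H X) @ (P k # H i # map H rest) @ V"
    using gap_word_split_adjacent[OF k, of gs] gs_k unfolding U_def V_def X_def by simp
  have "gap_segment gs' 0 (k - 1) = U" "gap_segment gs' (Suc k) n = V"
    unfolding U_def V_def using unchanged by (auto intro: gap_segment_cong)
  then have new:
    "gap_segment gs' 0 n = U @ (P (k - 1) # map H (gs' ! (k - 1))) @ (P k # map H rest) @ V"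
    using gap_word_split_adjacent[OF k, of gs'] gs'_k by simp
  have in_omega: "gap_segment gs 0 n \<in> omega L n" "gap_segment gs' 0 n \<in> omega L n"
    using gap_word_in_omega wf gaps_wf_gap_transfer[OF wf] k unfolding gs'_def by auto
  show ?thesis
    unfolding gs'_def[symmetric]
  proof (cases "i = k")
    case False
    then have "gap_segment gs 0 n = (U @ P (k - 1) # map H X) @ [P k, H i] @ (map H rest @ V)"
      and "gap_segment gs' 0 n = (U @ P (k - 1) # map H X) @ [H i, P k] @ (map H rest @ V)"
      using old new gs'_prev by simp_all
    then show "move (gap_segment gs 0 n) (gap_segment gs' 0 n)"
      using move_in_context[of "U @ P (k - 1) # map H X" "[P k, H i]" "map H rest @ V" "[H i, P k]"]
        move_T1_front[of k i] in_omega False by simp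
  next
    case True
    have prev: "(k + n - 1) mod n = k - 1"
      using k by (metis Nat.add_diff_assoc2 add.commute less_imp_diff_less mod_add_self1 mod_less)
    have "gap_segment gs 0 n = U @ (P (k - 1) # map H X @ [P k, H k]) @ (map H rest @ V)"
      and "gap_segment gs' 0 n = U @ (P (k - 1) # H (k - 1) # map H X @ [P k]) @ (map H rest @ V)"
      using old new gs'_prev True by simp_all
    then show "move (gap_segment gs 0 n) (gap_segment gs' 0 n)"
      using move_in_context[of U "P (k - 1) # map H X @ [P k, H k]" "map H rest @ V"
          "P (k - 1) # H (k - 1) # map H X @ [P k]"]
        move_T2_front[of "k - 1" X k "map H rest @ V @ U"] in_omega prev by simp
  qed
qed

lemma move_T1_wrap:
  assumes "P 0 # H i # A \<in> omega L n" and w': "P 0 # A @ [H i] \<in> omega L n" and "i \<noteq> 0"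
  shows "move (P 0 # H i # A) (rotate (L - 1) (P 0 # A @ [H i]))"
proof -
  have "L - 1 = length (P 0 # A)" using length_omega[OF w'] by simp
  then have "rotate (L - 1) (P 0 # A @ [H i]) = H i # P 0 # A"
    using rotate_append[of "P 0 # A" "[H i]"] by (simp del: rotate_Suc)
  then show ?thesis
    using move_T1_front[OF assms(1) _ assms(3)] rotate_in_omega[OF w', of "L - 1"] by simp
qed

text \<open>Reduced to move_T2_front by rotating the block of particle n - 1 to the front.\<close>
lemma move_T2_wrap:
  assumes w: "P 0 # H 0 # A @ P (n - 1) # map H Z \<in> omega L n"
    and w': "P 0 # A @ P (n - 1) # H (n - 1) # map H Z \<in> omega L n" and "2 \<le> n"
  shows "move (P 0 # H 0 # A @ P (n - 1) # map H Z)
    (rotate (L - 1) (P 0 # A @ P (n - 1) # H (n - 1) # map H Z))"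
proof -
  define X Y X' Y' where "X = P 0 # H 0 # A" and "Y = P (n - 1) # map H Z"
    and "X' = P 0 # A" and "Y' = P (n - 1) # H (n - 1) # map H Z"
  have "length (Y' @ X') = L" using length_omega[OF w'] unfolding X'_def Y'_def by simp
  have "Y @ X \<in> omega L n" "Y' @ X' \<in> omega L n"
    using rotate_in_omega[OF w, of "length X"] rotate_append[of X Y]
      rotate_in_omega[OF w', of "length X'"] rotate_append[of X' Y']
    unfolding X_def Y_def X'_def Y'_def by simp_all
  moreover have "(0 + n - 1) mod n = n - 1" using \<open>2 \<le> n\<close> by simp
  ultimately have "move (Y @ X) (Y' @ X')"
    using move_T2_front[of "n - 1" Z 0 A] unfolding X_def Y_def X'_def Y'_def by simp
  then have "move (rotate (length Y) (Y @ X)) (rotate (length Y) (Y' @ X'))" by (rule move_rotate)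
  moreover have "rotate (length Y) (Y @ X) = X @ Y" by (rule rotate_append)
  moreover have "rotate (L - 1) (X' @ Y') = rotate (length Y) (Y' @ X')"
  proof -
    have "rotate (L - 1) (X' @ Y') = rotate (L - 1) (rotate (length Y') (Y' @ X'))"
      using rotate_append[of Y' X'] by simp
    also have "\<dots> = rotate (L - 1 + length Y') (Y' @ X')" by (simp add: rotate_rotate)
    also have "L - 1 + length Y' = L + length Y" unfolding Y'_def Y_def using L_pos by simp
    finally show ?thesis using \<open>length (Y' @ X') = L\<close> by (metis mod_add_self1 rotate_conv_mod)
  qed
  ultimately show ?thesis unfolding X_def Y_def X'_def Y'_def by simp
qed

lemma move_gap_transfer_wrap:
  assumes wf: "gaps_wf L n gs" and "2 \<le> n" and gs_0: "gs ! 0 = i # rest"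
  shows "move (gap_segment gs 0 n) (rotate (L - 1) (gap_segment (gap_transfer gs 0 (n - 1)) 0 n))"
proof -
  define gs' where "gs' = gap_transfer gs 0 (n - 1)"
  define Z where "Z = gs ! (n - 1)"
  define M where "M = gap_segment gs 1 (n - 1)"
  have "length gs = n" using wf unfolding gaps_wf_def by simp
  then have gs'_0: "gs' ! 0 = rest"
    and gs'_last: "gs' ! (n - 1) = (if i = 0 then (n - 1) # Z else Z @ [i])"
    and unchanged: "\<And>j. j \<noteq> 0 \<Longrightarrow> j \<noteq> n - 1 \<Longrightarrow> gs' ! j = gs ! j"
    unfolding gs'_def gap_transfer_def gs_0 Z_def using \<open>2 \<le> n\<close> by auto
  have old: "gap_segment gs 0 n = P 0 # H i # map H rest @ M @ P (n - 1) # map H Z"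
    using gap_word_split_ends[OF \<open>2 \<le> n\<close>, of gs] gs_0 unfolding M_def Z_def by simp
  have "gap_segment gs' 1 (n - 1) = M"
    unfolding M_def using unchanged by (auto intro: gap_segment_cong)
  then have new: "gap_segment gs' 0 n = P 0 # map H rest @ M @ P (n - 1) # map H (gs' ! (n - 1))"
    using gap_word_split_ends[OF \<open>2 \<le> n\<close>, of gs'] gs'_0 by simp
  have "gaps_wf L n gs'" unfolding gs'_def using gaps_wf_gap_transfer[OF wf] \<open>2 \<le> n\<close> by simp
  then have "gap_segment gs 0 n \<in> omega L n" "gap_segment gs' 0 n \<in> omega L n"
    using gap_word_in_omega wf by auto
  then show ?thesis
    using move_T1_wrap[of i "map H rest @ M @ P (n - 1) # map H Z"]
      move_T2_wrap[of "map H rest @ M" Z] \<open>2 \<le> n\<close> old new gs'_last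
    unfolding gs'_def[symmetric] by (cases "i = 0") simp_all
qed

definition reaches_rotation :: "letter list \<Rightarrow> letter list \<Rightarrow> bool" where
  "reaches_rotation w w' \<longleftrightarrow> (\<exists>s. reaches w (rotate s w'))"

lemma reflp_reaches_rotation: "reflp reaches_rotation"
  unfolding reaches_rotation_def by (auto intro!: reflpI exI[of _ 0])

lemma transp_reaches_rotation: "transp reaches_rotation"
proof (rule transpI)
  fix u v w assume "reaches_rotation u v" "reaches_rotation v w"
  then obtain s t where "reaches u (rotate s v)" "reaches v (rotate t w)"
    unfolding reaches_rotation_def by blast
  then have "reaches u (rotate (s + t) w)"
    using reaches_rotate[of v "rotate t w" s] by (simp add: rotate_rotate)
  then show "reaches_rotation u w" unfolding reaches_rotation_def by blast
qed

lemma reaches_gap_emptied: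
  assumes "gaps_wf L n gs" and "1 \<le> k" and "k < n"
  shows "\<exists>X. reaches (gap_segment gs 0 n) (gap_segment (gs[k := [], k - 1 := X]) 0 n)
    \<and> gaps_wf L n (gs[k := [], k - 1 := X])
    \<and> set X \<subseteq> set (gs ! (k - 1)) \<union> (set (gs ! k) - {k}) \<union> {k - 1}"
proof (rule gap_emptied_by_transfers[OF reflp_on_rtranclp transp_rtranclp _ _ _ _ assms(1)])
  fix gs assume wf: "gaps_wf L n gs" and "gs ! k \<noteq> []"
  then obtain i rest where "gs ! k = i # rest" by (cases "gs ! k") auto
  then show "reaches (gap_segment gs 0 n) (gap_segment (gap_transfer gs k (k - 1)) 0 n)"
    using move_gap_transfer[OF wf assms(2,3)] by blast
qed (use assms(2,3) in auto)

lemma reaches_rotation_gap0_emptied: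
  assumes "gaps_wf L n gs" and "2 \<le> n"
  shows "\<exists>X. reaches_rotation (gap_segment gs 0 n) (gap_segment (gs[0 := [], n - 1 := X]) 0 n)
    \<and> gaps_wf L n (gs[0 := [], n - 1 := X])
    \<and> set X \<subseteq> set (gs ! (n - 1)) \<union> (set (gs ! 0) - {0}) \<union> {n - 1}"
proof (rule gap_emptied_by_transfers
    [OF reflp_reaches_rotation transp_reaches_rotation _ _ _ _ assms(1)])
  fix gs assume wf: "gaps_wf L n gs" and "gs ! 0 \<noteq> []"
  then obtain i rest where "gs ! 0 = i # rest" by (cases "gs ! 0") auto
  then show "reaches_rotation (gap_segment gs 0 n) (gap_segment (gap_transfer gs 0 (n - 1)) 0 n)"
    using move_gap_transfer_wrap[OF wf assms(2)] unfolding reaches_rotation_def by blast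
qed (use assms(2) in auto)

lemma reaches_upper_gaps_emptied:
  assumes wf: "gaps_wf L n gs"
  shows "d \<le> n - 1 \<Longrightarrow> \<exists>gs'. reaches (gap_segment gs 0 n) (gap_segment gs' 0 n) \<and> gaps_wf L n gs'
           \<and> (\<forall>k. n - d \<le> k \<and> k < n \<longrightarrow> gs' ! k = [])"
proof (induction d)
  case (Suc d)
  then obtain gs' where gs': "reaches (gap_segment gs 0 n) (gap_segment gs' 0 n)" "gaps_wf L n gs'"
    "\<forall>k. n - d \<le> k \<and> k < n \<longrightarrow> gs' ! k = []" by auto
  define k where "k = n - Suc d"
  have k: "1 \<le> k" "k < n" using Suc.prems one_le_n unfolding k_def by auto
  obtain X where X: "reaches (gap_segment gs' 0 n) (gap_segment (gs'[k := [], k - 1 := X]) 0 n)"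
    "gaps_wf L n (gs'[k := [], k - 1 := X])"
    using reaches_gap_emptied[OF gs'(2) k] by blast
  have "length gs' = n" using gs'(2) unfolding gaps_wf_def by simp
  then have "\<forall>j. n - Suc d \<le> j \<and> j < n \<longrightarrow> gs'[k := [], k - 1 := X] ! j = []"
    using gs'(3) Suc.prems k unfolding k_def by (auto simp: nth_list_update)
  then show ?case using X gs'(1) rtranclp_trans[of move] by blast
qed (use wf in auto)

text \<open>Emptying gap j into gap j - 1, then gap j - 1 into gap j - 2, and so on, turns
  every box into a box 0 following particle 0, provided no box label exceeds its gap.\<close>
lemma reaches_packed_from_single_gap:
  "gaps_wf L n gs \<Longrightarrow> j < n \<Longrightarrow> \<forall>k. 0 < k \<and> k < n \<and> k \<noteq> j \<longrightarrow> gs ! k = []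
    \<Longrightarrow> set (gs ! 0) \<subseteq> {0} \<Longrightarrow> set (gs ! j) \<subseteq> {..j}
    \<Longrightarrow> reaches (gap_segment gs 0 n) (gap_segment (packed_gaps L n) 0 n)"
proof (induction j arbitrary: gs)
  case 0
  then show ?case using gaps_eq_packed[OF _ one_le_n] by auto
next
  case (Suc j)
  obtain X where X: "reaches (gap_segment gs 0 n) (gap_segment (gs[Suc j := [], j := X]) 0 n)"
    "gaps_wf L n (gs[Suc j := [], j := X])"
    "set X \<subseteq> set (gs ! j) \<union> (set (gs ! Suc j) - {Suc j}) \<union> {j}"
    using reaches_gap_emptied[OF Suc.prems(1) _ Suc.prems(2)] by auto
  have "length gs = n" using Suc.prems(1) unfolding gaps_wf_def by simp
  have "set (gs ! j) \<subseteq> {..j}"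
    using Suc.prems(3,4) Suc.prems(2) by (cases "j = 0") auto
  then have "set X \<subseteq> {..j}" using X(3) Suc.prems(5) by (fastforce simp: le_Suc_eq)
  define gs' where "gs' = gs[Suc j := [], j := X]"
  have gs'_j: "gs' ! j = X" and gs'_Suc: "gs' ! Suc j = []"
    and unchanged: "\<And>k. k \<noteq> j \<Longrightarrow> k \<noteq> Suc j \<Longrightarrow> gs' ! k = gs ! k"
    using \<open>length gs = n\<close> Suc.prems(2) unfolding gs'_def by auto
  have "\<forall>k. 0 < k \<and> k < n \<and> k \<noteq> j \<longrightarrow> gs' ! k = []"
  proof (intro allI impI)
    fix k assume "0 < k \<and> k < n \<and> k \<noteq> j"
    then show "gs' ! k = []" using Suc.prems(3) gs'_Suc unchanged by (cases "k = Suc j") simp_all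
  qed
  moreover have "set (gs' ! 0) \<subseteq> {0}"
    using Suc.prems(4) gs'_j unchanged \<open>set X \<subseteq> {..j}\<close> by (cases "j = 0") auto
  ultimately have "reaches (gap_segment gs' 0 n) (gap_segment (packed_gaps L n) 0 n)"
    using Suc.IH[OF X(2)[folded gs'_def]] Suc.prems(2) gs'_j \<open>set X \<subseteq> {..j}\<close> by simp
  then show ?case using X(1) unfolding gs'_def by (simp add: rtranclp_trans)
qed

abbreviation packed :: "letter list" where
  "packed \<equiv> gap_segment (packed_gaps L n) 0 n"

lemma packed_in_omega: "packed \<in> omega L n"
  using gap_word_in_omega[OF packed_gaps_wf[OF one_le_n n_less_L]] .

lemma reaches_packed_rotated: "reaches packed (rotate (L - 1) packed)"
proof (cases "n = 1")
  case True
  then have "packed = P 0 # replicate (L - 1) (H 0)"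
    unfolding gap_segment_def packed_gaps_def by (simp add: map_replicate)
  then show ?thesis using move_single_particle[OF True] by simp
next
  case False
  then have "2 \<le> n" using one_le_n by simp
  have packed_0: "packed_gaps L n ! 0 = 0 # replicate (L - n - 1) 0"
  proof -
    have "L - n = Suc (L - n - 1)" using n_less_L by simp
    then have "replicate (L - n) (0::nat) = 0 # replicate (L - n - 1) 0" by (subst \<open>L - n = _\<close>) simp
    then show ?thesis using nth_packed_gaps[of 0 n L] one_le_n by simp
  qed
  define gs where "gs = gap_transfer (packed_gaps L n) 0 (n - 1)"
  have wf: "gaps_wf L n (packed_gaps L n)" by (rule packed_gaps_wf[OF one_le_n n_less_L])
  then have "move packed (rotate (L - 1) (gap_segment gs 0 n))"
    using move_gap_transfer_wrap[OF wf \<open>2 \<le> n\<close> packed_0] unfolding gs_def by simp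
  moreover have "reaches (gap_segment gs 0 n) packed"
  proof (rule reaches_packed_from_single_gap)
    show "gaps_wf L n gs" unfolding gs_def using gaps_wf_gap_transfer[OF wf] \<open>2 \<le> n\<close> by simp
    show "n - 1 < n" using one_le_n by simp
    have "length (packed_gaps L n) = n" by (rule length_packed_gaps[OF one_le_n])
    then have "gs ! 0 = replicate (L - n - 1) 0" "gs ! (n - 1) = [n - 1]"
      and "\<forall>k. 0 < k \<and> k < n \<and> k \<noteq> n - 1 \<longrightarrow> gs ! k = []"
      using \<open>2 \<le> n\<close> nth_packed_gaps[of _ n L] unfolding gs_def gap_transfer_def packed_0
      by (auto simp: nth_list_update)
    then show "\<forall>k. 0 < k \<and> k < n \<and> k \<noteq> n - 1 \<longrightarrow> gs ! k = []" "set (gs ! 0) \<subseteq> {0}"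
      "set (gs ! (n - 1)) \<subseteq> {..n - 1}" by auto
  qed
  ultimately show ?thesis
    using reaches_rotate[of "gap_segment gs 0 n" packed "L - 1"]
    by (simp add: converse_rtranclp_into_rtranclp)
qed

text \<open>Rotating by L - 1 repeatedly reaches every rotation, L - 1 being invertible mod L.\<close>
lemma rotation_reaches_packed: "reaches (rotate s packed) packed"
proof -
  have "reaches packed (rotate ((L - 1) * t) packed)" for t
  proof (induction t)
    case (Suc t)
    have "reaches (rotate ((L - 1) * t) packed) (rotate ((L - 1) * t) (rotate (L - 1) packed))"
      using reaches_rotate[OF reaches_packed_rotated] .
    also have "rotate ((L - 1) * t) (rotate (L - 1) packed) = rotate ((L - 1) * Suc t) packed"
      by (simp add: rotate_rotate add.commute)
    finally show ?case using Suc.IH by (rule rtranclp_trans[rotated])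
  qed simp
  then have "reaches (rotate s packed) (rotate s (rotate ((L - 1) * s) packed))"
    using reaches_rotate by blast
  also have "rotate s (rotate ((L - 1) * s) packed) = rotate (L * s) packed"
    using L_pos by (cases L) (simp_all add: rotate_rotate)
  also have "\<dots> = packed" using length_omega[OF packed_in_omega] by simp
  finally show ?thesis .
qed

lemma reaches_imp_reaches_rotation: "reaches w w' \<Longrightarrow> reaches_rotation w w'"
  unfolding reaches_rotation_def by (intro exI[of _ 0]) simp

text \<open>Gather all boxes after particle 0, pass them on to particle n - 1 (this moves the
  word cyclically), and sort them back down to particle 0.\<close>
lemma gap_word_reaches_rotation_packed:
  assumes wf: "gaps_wf L n gs"
  shows "reaches_rotation (gap_segment gs 0 n) packed"
proof (cases "n = 1")
  case True
  then have "gs = packed_gaps L n"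
    using gaps_eq_packed[OF wf one_le_n] wf unfolding gaps_wf_def by auto
  then show ?thesis using reflp_reaches_rotation by (simp add: reflpD)
next
  case False
  then have "2 \<le> n" using one_le_n by simp
  obtain gs1 where gs1: "reaches (gap_segment gs 0 n) (gap_segment gs1 0 n)" "gaps_wf L n gs1"
    "\<forall>k. 1 \<le> k \<and> k < n \<longrightarrow> gs1 ! k = []"
    using reaches_upper_gaps_emptied[OF wf, of "n - 1"] \<open>2 \<le> n\<close> by auto
  obtain X where
    X: "reaches_rotation (gap_segment gs1 0 n) (gap_segment (gs1[0 := [], n - 1 := X]) 0 n)"
    "gaps_wf L n (gs1[0 := [], n - 1 := X])"
    using reaches_rotation_gap0_emptied[OF gs1(2) \<open>2 \<le> n\<close>] by blast
  have "length gs1 = n" and "n - 1 < n" using gs1(2) one_le_n unfolding gaps_wf_def by simp_all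
  have "reaches (gap_segment (gs1[0 := [], n - 1 := X]) 0 n) packed"
  proof (rule reaches_packed_from_single_gap[OF X(2) \<open>n - 1 < n\<close>])
    show "\<forall>k. 0 < k \<and> k < n \<and> k \<noteq> n - 1 \<longrightarrow> gs1[0 := [], n - 1 := X] ! k = []"
      using gs1(3) by (simp add: nth_list_update)
    show "set (gs1[0 := [], n - 1 := X] ! 0) \<subseteq> {0}"
      using \<open>length gs1 = n\<close> \<open>2 \<le> n\<close> by (simp add: nth_list_update)
    have "\<forall>i\<in>set (gs1[0 := [], n - 1 := X] ! (n - 1)). i < n"
      using X(2) \<open>n - 1 < n\<close> unfolding gaps_wf_def by blast
    then show "set (gs1[0 := [], n - 1 := X] ! (n - 1)) \<subseteq> {..n - 1}" by auto
  qed
  then show ?thesis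
    using reaches_imp_reaches_rotation gs1(1) X(1) transpD[OF transp_reaches_rotation] by metis
qed

lemma all_reach_packed: "w \<in> omega L n \<Longrightarrow> reaches w packed"
proof -
  assume "w \<in> omega L n"
  then obtain s gs where wf: "gaps_wf L n gs" and w: "w = rotate s (gap_segment gs 0 n)"
    using omega_eq_rotate_gap_word one_le_n by blast
  then obtain t where "reaches (gap_segment gs 0 n) (rotate t packed)"
    using gap_word_reaches_rotation_packed unfolding reaches_rotation_def by blast
  then have "reaches w (rotate s (rotate t packed))"
    unfolding w by (rule reaches_rotate)
  then have "reaches w (rotate (s + t) packed)" by (simp add: rotate_rotate)
  then show ?thesis using rotation_reaches_packed by (meson rtranclp_trans)
qed

lemma stationary_rotate1_invariant:
  assumes stat: "stationary_on (omega L n) (rate L n p q) \<pi>"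
  shows "\<forall>w\<in>omega L n. \<pi> (rotate1 w) = \<pi> w"
proof -
  have "stationary_on (omega L n) (rate L n p q) (\<pi> \<circ> rotate1)"
    using stationary_on_symmetry[OF stat bij_betw_rotate1_omega] rate_rotate1 length_omega L_pos
    by blast
  then show ?thesis
    using stationary_unique[OF _ stat _ packed_in_omega] all_reach_packed by auto
qed

end

theorem proposition6p1:
  fixes L n :: nat and p q :: "nat \<Rightarrow> real" and \<pi> :: "letter list \<Rightarrow> real"
  assumes "1 \<le> n" and "n < L"
    and "\<forall>k<n. 0 < p k" and "\<forall>k<n. 0 < q k"
    and "stationary_dist L n p q \<pi>"
  shows "(\<forall>i<n. \<forall>j<L. expect L n \<pi> (tau i j) = 1 / real L)
       \<and> (\<forall>i<n. \<forall>j<L. \<forall>j'<L. j < j' \<longrightarrow> expect L n \<pi> (eta i j) = expect L n \<pi> (eta i j'))"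
proof -
  interpret multispecies_ring L n p q using assms(1-4) by unfold_locales
  have stat: "stationary_on (omega L n) (rate L n p q) \<pi>"
    using assms(5) stationary_dist_iff_stationary_on by blast
  have invariant: "\<forall>w\<in>omega L n. \<pi> (rotate1 w) = \<pi> w"
    by (rule stationary_rotate1_invariant[OF stat])
  have tau_const: "expect L n \<pi> (tau i j) = expect L n \<pi> (tau i 0)" if "j < L" for i j
    using expect_column_const[where f = "\<lambda>j. tau i j", OF invariant tau_rotate1 that] .
  have eta_const: "expect L n \<pi> (eta i j) = expect L n \<pi> (eta i 0)" if "j < L" for i j
    using expect_column_const[where f = "\<lambda>j. eta i j", OF invariant eta_rotate1 that] .
  have "expect L n \<pi> (tau i j) = 1 / real L" if "i < n" "j < L" for i j
  proof -
    have "(\<Sum>j<L. expect L n \<pi> (tau i j)) = (\<Sum>j<L. expect L n \<pi> (tau i 0))"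
      by (intro sum.cong refl tau_const) simp
    then have "real L * expect L n \<pi> (tau i 0) = 1" using sum_expect_tau[OF stat \<open>i < n\<close>] by simp
    then show ?thesis unfolding tau_const[OF \<open>j < L\<close>] using L_pos by (simp add: field_simps)
  qed
  moreover have "expect L n \<pi> (eta i j) = expect L n \<pi> (eta i j')" if "j < L" "j' < L" for i j j'
    unfolding eta_const[OF that(1)] eta_const[OF that(2)] ..
  ultimately show ?thesis by blast
qed

end
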